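(* Let $\phi:\mathbb{R}^{n\times n}\to\mathbb{R}$ be twice differentiable, $L$-gradient Lipschitz and $(\mu,2r)$-restricted strongly convex, let $M^\star=\arg\min\phi$ satisfy $M^\star\succeq0$ and $\operatorname{rank}(M^\star)\le r$, and let $f(X)=\phi(XX^T)$. Let $X\in\mathbb{R}^{n\times r}$ with $XX^T\ne M^\star$ have singular value decomposition $X=\sum_{i=1}^r\sigma_iu_iv_i^T$ with $\|u_i\|=\|v_i\|=1$ and $\sigma_1\ge\cdots\ge\sigma_r$, and let $\eta\ge0$ with $X^TX+\eta I$ positive definite. Then \[ \frac{\|\nabla f(X)\|_{X,\eta}^*}{\|XX^T-M^\star\|_F}\ge\max_{k\in\{1,\dots,r\}}\frac{\mu+L}{\sqrt2}\cdot\frac{\cos\theta_k-\delta}{\sqrt{1+\eta/\lambda_k(XX^T)}}, \] where $\delta=\frac{L-\mu}{L+\mu}$ and \[ \cos\theta_k=\max_{Y\in\mathbb{R}^{n\times r}}\frac{\langle XX^T-M^\star,X_kY^T+YX_k^T\rangle}{\|XX^T-M^\star\|_F\,\|X_kY^T+YX_k^T\|_F},\qquad X_k=\sum_{i=1}^k\sigma_iu_iv_i^T. \]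
   Context: $\phi$ is $L$-gradient Lipschitz if $\|\nabla\phi(M+E)-\nabla\phi(M)\|_F\le L\|E\|_F$ for all $M,E$; $(\mu,k)$-restricted strongly convex if $\langle\nabla^2\phi(M)[E],E\rangle\ge\mu\|E\|_F^2$ for all $M,E\in\mathbb{R}^{n\times n}$ of rank at most $k$. Dual local norm $\|V\|_{X,\eta}^*=\|V(X^TX+\eta I)^{-1/2}\|_F$. Eigenvalues ordered decreasingly. *)

theory Defs
  imports "HOL-Analysis.Analysis" "HOL-Computational_Algebra.Polynomial"
begin

(* Gradient w.r.t. the Frobenius (= componentwise) inner product on matrices *)
definition grad :: "('a::real_inner \<Rightarrow> real) \<Rightarrow> 'a \<Rightarrow> 'a" where
  "grad f x = (THE g. (f has_derivative (\<lambda>h. g \<bullet> h)) (at x))"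

definition twice_differentiable :: "('a::real_inner \<Rightarrow> real) \<Rightarrow> bool" where
  "twice_differentiable f \<longleftrightarrow>
     (\<forall>x. (f has_derivative (\<lambda>h. grad f x \<bullet> h)) (at x)) \<and>
     (\<forall>x. grad f differentiable (at x))"

definition hess :: "('a::real_inner \<Rightarrow> real) \<Rightarrow> 'a \<Rightarrow> 'a \<Rightarrow> 'a" where
  "hess f x = frechet_derivative (grad f) (at x)"

definition grad_lipschitz :: "real \<Rightarrow> (real^'n^'n \<Rightarrow> real) \<Rightarrow> bool" where
  "grad_lipschitz L \<phi> \<longleftrightarrow>
     (\<forall>M E. norm (grad \<phi> (M + E) - grad \<phi> M) \<le> L * norm E)"

definition restricted_strongly_convex :: "real \<Rightarrow> nat \<Rightarrow> (real^'n^'n \<Rightarrow> real) \<Rightarrow> bool" where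
  "restricted_strongly_convex \<mu> k \<phi> \<longleftrightarrow>
     (\<forall>M E. rank M \<le> k \<and> rank E \<le> k \<longrightarrow> hess \<phi> M E \<bullet> E \<ge> \<mu> * (norm E)\<^sup>2)"

definition psd :: "real^'n^'n \<Rightarrow> bool" where
  "psd A \<longleftrightarrow> transpose A = A \<and> (\<forall>x. x \<bullet> (A *v x) \<ge> 0)"

definition pd :: "real^'n^'n \<Rightarrow> bool" where
  "pd A \<longleftrightarrow> transpose A = A \<and> (\<forall>x. x \<noteq> 0 \<longrightarrow> x \<bullet> (A *v x) > 0)"

definition inv_sqrt :: "real^'n^'n \<Rightarrow> real^'n^'n" where
  "inv_sqrt P = (THE S. psd S \<and> S ** S = matrix_inv P)"

definition dual_local_norm :: "real^'r^'n \<Rightarrow> real^'r^'n \<Rightarrow> real \<Rightarrow> real" where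
  "dual_local_norm V X \<eta> = norm (V ** inv_sqrt (transpose X ** X + \<eta> *\<^sub>R mat 1))"

definition charpoly :: "real^'n^'n \<Rightarrow> real poly" where
  "charpoly A = det (\<chi> i j. (if i = j then [:0, 1:] else 0) - [:A $ i $ j:])"

(* k-th largest eigenvalue (k >= 1), counted with multiplicity *)
definition eigval :: "nat \<Rightarrow> real^'n^'n \<Rightarrow> real" where
  "eigval k A = rev (sorted_list_of_multiset (proots (charpoly A))) ! (k - 1)"

definition outer :: "real^'n \<Rightarrow> real^'m \<Rightarrow> real^'m^'n" where
  "outer u v = (\<chi> i j. u $ i * v $ j)"

end

theory Submission
  imports Defs
begin

(*
  Let D = X X^T - Mstar and let P be the orthogonal projector onto span {u_1, ..., u_k}.  The
  compression (I - P) D (I - P) is orthogonal to every X_k Y^T + Y X_k^T, so cos theta_k is at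
  most |Z| / |D| for the remainder Z = D P + P D - P D P.  This remainder is itself of the form
  X Y^T + Y X^T, namely for Y = sum_{i <= k} (1 / sigma_i) (D - P D / 2) u_i v_i^T, and
  |Y (X^T X + eta I)^(1/2)| <= sqrt (1 + eta / sigma_k^2) |Z| / sqrt 2.
  Since grad phi vanishes at Mstar, the mean value theorem gives <grad f (X), Y> = <H D, Z> for
  the Hessian H at a point between Mstar and X X^T.  All matrices involved have their column
  spaces in span {u_i} + range Mstar, of dimension at most 2 r, where mu <= H <= L; polarization
  then gives 2 <H D, Z> >= (mu + L) |Z|^2 - (L - mu) |D| |Z|.  Together with
  <grad f (X), Y> <= |grad f (X)|*_{X,eta} |Y (X^T X + eta I)^(1/2)| this yields the bound.
*)

section \<open>Frobenius inner product and outer products\<close>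

lemma inner_matrix: "(A::real^'c^'r) \<bullet> B = (\<Sum>i\<in>UNIV. \<Sum>j\<in>UNIV. A$i$j * B$i$j)"
  by (simp add: inner_vec_def)

lemma sum_rotate3: "(\<Sum>i\<in>A. \<Sum>j\<in>B. \<Sum>k\<in>C. f i j k) = (\<Sum>j\<in>B. \<Sum>k\<in>C. \<Sum>i\<in>A. f i j k)"
  by (subst sum.swap) (rule sum.cong[OF refl], rule sum.swap)

lemma inner_matrix_mult_right: "(A::real^'c^'r) \<bullet> ((B::real^'k^'r) ** C) = (transpose B ** A) \<bullet> C"
  apply (simp add: inner_matrix matrix_matrix_mult_def transpose_def sum_distrib_left sum_distrib_right)
  apply (rule trans[OF sum_rotate3], rule trans[OF sum.swap])
  by (simp add: algebra_simps)

lemma inner_matrix_mult_left: "(A::real^'c^'r) \<bullet> ((B::real^'k^'r) ** C) = (A ** transpose C) \<bullet> B"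
  apply (simp add: inner_matrix matrix_matrix_mult_def transpose_def sum_distrib_left sum_distrib_right)
  apply (rule sum.cong, simp)
  apply (subst sum.swap)
  by (simp add: algebra_simps)

lemma inner_transpose_transpose: "transpose (A::real^'c^'r) \<bullet> transpose B = A \<bullet> B"
  by (simp add: inner_matrix transpose_def) (subst sum.swap, simp)

lemma inner_transpose_right: "(A::real^'c^'r) \<bullet> transpose B = transpose A \<bullet> B"
  by (metis inner_transpose_transpose transpose_transpose)

lemma gram_eq_0_iff: "(A::real^'c^'r) ** transpose A = 0 \<longleftrightarrow> A = 0"
proof
  assume "A ** transpose A = 0"
  then have "A \<bullet> A = 0"
    using inner_matrix_mult_left[of "mat 1" A "transpose A"] by simp
  then show "A = 0" by simp
qed (simp add: matrix_matrix_mult_def vec_eq_iff)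

lemma transpose_zero [simp]: "transpose (0::real^'c^'r) = 0"
  by (simp add: transpose_def vec_eq_iff)

lemma transpose_add: "transpose (A + B) = transpose A + transpose (B::real^'c^'r)"
  by (simp add: transpose_def vec_eq_iff)

lemma transpose_diff: "transpose (A - B) = transpose A - transpose (B::real^'c^'r)"
  by (simp add: transpose_def vec_eq_iff)

lemma transpose_sum: "transpose (\<Sum>i\<in>I. A i) = (\<Sum>i\<in>I. transpose (A i :: real^'c^'r))"
  by (induction I rule: infinite_finite_induct) (auto simp: transpose_def vec_eq_iff)

lemma matrix_add_rdistrib: "((A::real^'k^'r) + B) ** (C::real^'c^'k) = A ** C + B ** C"
  by (simp add: matrix_matrix_mult_def vec_eq_iff sum.distrib algebra_simps)

lemma matrix_diff_rdistrib: "((A::real^'k^'r) - B) ** (C::real^'c^'k) = A ** C - B ** C"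
  by (simp add: matrix_matrix_mult_def vec_eq_iff sum_subtractf algebra_simps)

lemma matrix_diff_ldistrib: "(C::real^'r^'c) ** ((A::real^'k^'r) - B) = C ** A - C ** B"
  by (simp add: matrix_matrix_mult_def vec_eq_iff sum_subtractf algebra_simps)

lemma matrix_mult_scaleR_left: "(c *\<^sub>R A) ** (B::real^'c^'k) = c *\<^sub>R (A ** B)"
  by (simp add: matrix_matrix_mult_def vec_eq_iff sum_distrib_left algebra_simps)

lemma matrix_mult_scaleR_right: "(A::real^'k^'r) ** (c *\<^sub>R B) = c *\<^sub>R (A ** B)"
  by (simp add: matrix_matrix_mult_def vec_eq_iff sum_distrib_left algebra_simps)

lemma matrix_mult_sum_left: "(\<Sum>i\<in>I. A i) ** (B::real^'c^'k) = (\<Sum>i\<in>I. A i ** B)"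
  by (induction I rule: infinite_finite_induct) (auto simp: matrix_add_rdistrib)

lemma matrix_mult_sum_right: "(B::real^'c^'k) ** (\<Sum>i\<in>I. A i) = (\<Sum>i\<in>I. B ** A i)"
  by (induction I rule: infinite_finite_induct) (auto simp: matrix_add_ldistrib)

lemma matrix_vector_mult_sum_left: "(\<Sum>i\<in>I. A i) *v (x::real^'c) = (\<Sum>i\<in>I. A i *v x)"
  by (induction I rule: infinite_finite_induct) (auto simp: matrix_vector_mult_add_rdistrib)

lemma matrix_vector_mult_sum_right: "(A::real^'m^'n) *v (\<Sum>i\<in>I. x i) = (\<Sum>i\<in>I. A *v x i)"
  by (induction I rule: infinite_finite_induct) (auto simp: matrix_vector_right_distrib)

lemma inner_outer_outer: "outer (u::real^'n) (v::real^'m) \<bullet> outer a b = (u \<bullet> a) * (v \<bullet> b)"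
  by (simp add: outer_def inner_matrix inner_vec_def sum_product) (simp add: algebra_simps)

lemma outer_mult_outer: "outer (u::real^'n) (v::real^'m) ** outer a (b::real^'k) = (v \<bullet> a) *\<^sub>R outer u b"
  by (simp add: outer_def matrix_matrix_mult_def inner_vec_def vec_eq_iff
      sum_distrib_left sum_distrib_right algebra_simps)

lemma transpose_outer: "transpose (outer u v) = outer v u"
  by (simp add: outer_def transpose_def vec_eq_iff)

lemma matrix_mult_outer: "(M::real^'n^'k) ** outer u (v::real^'m) = outer (M *v u) v"
  by (simp add: outer_def matrix_matrix_mult_def matrix_vector_mult_def vec_eq_iff
      sum_distrib_right sum_distrib_left algebra_simps)

lemma outer_mult_matrix: "outer u (v::real^'n) ** (M::real^'m^'n) = outer u (transpose M *v v)"
  by (simp add: outer_def matrix_matrix_mult_def matrix_vector_mult_def transpose_def vec_eq_iff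
      sum_distrib_left algebra_simps)

lemma outer_mult_vector: "outer u (v::real^'n) *v x = (v \<bullet> x) *\<^sub>R u"
  by (simp add: outer_def matrix_vector_mult_def inner_vec_def vec_eq_iff sum_distrib_left algebra_simps)

lemma outer_scaleR_left: "outer (c *\<^sub>R u) v = c *\<^sub>R outer u v"
  and outer_scaleR_right: "outer u (c *\<^sub>R v) = c *\<^sub>R outer u v"
  by (simp_all add: outer_def vec_eq_iff)

lemma norm_outer: "norm (outer (u::real^'n) (v::real^'m)) = norm u * norm v"
proof -
  have "norm (outer u v) ^ 2 = (norm u * norm v) ^ 2"
    by (simp add: power2_norm_eq_inner inner_outer_outer power_mult_distrib)
  then show ?thesis by (simp add: power2_eq_iff_nonneg)
qed

text \<open>The derivative of \<open>Z \<mapsto> Z Z\<^sup>T\<close> at \<open>A\<close> in direction \<open>Y\<close>.\<close>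
definition sym_prod :: "real^'r^'n \<Rightarrow> real^'r^'n \<Rightarrow> real^'n^'n" where
  "sym_prod A Y = A ** transpose Y + Y ** transpose A"

section \<open>Orthonormal families and spectral sums\<close>

definition orthonormal_on :: "'i set \<Rightarrow> ('i \<Rightarrow> 'a::real_inner) \<Rightarrow> bool" where
  "orthonormal_on I w \<longleftrightarrow> (\<forall>i\<in>I. \<forall>j\<in>I. w i \<bullet> w j = (if i = j then 1 else 0))"

lemma orthonormal_on_subset: "orthonormal_on I w \<Longrightarrow> J \<subseteq> I \<Longrightarrow> orthonormal_on J w"
  unfolding orthonormal_on_def by blast

lemma orthonormal_on_inj: "orthonormal_on I w \<Longrightarrow> inj_on w I"
  unfolding orthonormal_on_def inj_on_def by (metis inner_commute one_neq_zero)

lemma sum_orthonormal_delta: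
  assumes "orthonormal_on I w" "finite I" "j \<in> I"
  shows "(\<Sum>i\<in>I. (w i \<bullet> w j) *\<^sub>R c i) = (c j :: 'b::real_vector)"
proof -
  have "(\<Sum>i\<in>I. (w i \<bullet> w j) *\<^sub>R c i) = (\<Sum>i\<in>I. if i = j then c i else 0)"
    using assms by (intro sum.cong) (auto simp: orthonormal_on_def)
  then show ?thesis using assms by simp
qed

lemma norm_sum_outer:
  fixes a :: "'i \<Rightarrow> real^'n" and w :: "'i \<Rightarrow> real^'m"
  assumes "orthonormal_on I w" "finite I"
  shows "(norm (\<Sum>i\<in>I. outer (a i) (w i)))\<^sup>2 = (\<Sum>i\<in>I. (norm (a i))\<^sup>2)"
proof -
  have "(norm (\<Sum>i\<in>I. outer (a i) (w i)))\<^sup>2 = (\<Sum>i\<in>I. \<Sum>j\<in>I. (a i \<bullet> a j) * (w i \<bullet> w j))"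
    by (simp add: power2_norm_eq_inner inner_sum_left inner_sum_right inner_outer_outer) (rule sum.swap)
  also have "\<dots> = (\<Sum>i\<in>I. a i \<bullet> a i)"
  proof (rule sum.cong[OF refl])
    fix i assume "i \<in> I"
    then show "(\<Sum>j\<in>I. (a i \<bullet> a j) * (w i \<bullet> w j)) = a i \<bullet> a i"
      using sum_orthonormal_delta[OF assms \<open>i \<in> I\<close>, of "\<lambda>j. a i \<bullet> a j"]
      by (simp add: inner_commute mult.commute)
  qed
  finally show ?thesis by (simp add: power2_norm_eq_inner)
qed

lemma sum_outer_mult_transpose:
  fixes a :: "'i \<Rightarrow> real^'n" and b :: "'i \<Rightarrow> real^'m" and w :: "'i \<Rightarrow> real^'k"
  assumes "orthonormal_on I w" "finite I" "J \<subseteq> I"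
  shows "(\<Sum>i\<in>I. outer (a i) (w i)) ** transpose (\<Sum>j\<in>J. outer (b j) (w j)) = (\<Sum>j\<in>J. outer (a j) (b j))"
proof -
  have "(\<Sum>i\<in>I. outer (a i) (w i)) ** transpose (\<Sum>j\<in>J. outer (b j) (w j))
      = (\<Sum>j\<in>J. \<Sum>i\<in>I. (w i \<bullet> w j) *\<^sub>R outer (a i) (b j))"
    by (simp add: transpose_sum transpose_outer matrix_mult_sum_left matrix_mult_sum_right outer_mult_outer)
  also have "\<dots> = (\<Sum>j\<in>J. outer (a j) (b j))"
  proof (rule sum.cong[OF refl])
    fix j assume "j \<in> J"
    with assms(3) have "j \<in> I" by blast
    then show "(\<Sum>i\<in>I. (w i \<bullet> w j) *\<^sub>R outer (a i) (b j)) = outer (a j) (b j)"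
      by (rule sum_orthonormal_delta[OF assms(1,2)])
  qed
  finally show ?thesis .
qed

lemma orthonormal_expansion:
  fixes w :: "'i \<Rightarrow> real^'m"
  assumes on: "orthonormal_on I w" and fin: "finite I" and card: "card I = CARD('m)"
  shows "(\<Sum>i\<in>I. (w i \<bullet> x) *\<^sub>R w i) = x"
proof -
  have inj: "inj_on w I" by (rule orthonormal_on_inj[OF on])
  have "pairwise orthogonal (w ` I)"
    using on inj unfolding pairwise_def orthogonal_def orthonormal_on_def inj_on_def by auto
  moreover have "0 \<notin> w ` I"
    using on unfolding orthonormal_on_def by (auto, metis inner_zero_left zero_neq_one)
  ultimately have "independent (w ` I)"
    by (rule pairwise_orthogonal_independent)
  moreover have "card (w ` I) = CARD('m)" using card inj by (simp add: card_image)
  ultimately have span: "span (w ` I) = UNIV"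
    by (simp add: dim_eq_full[symmetric] dim_eq_card_independent)
  define y where "y = x - (\<Sum>i\<in>I. (w i \<bullet> x) *\<^sub>R w i)"
  have "w j \<bullet> y = 0" if "j \<in> I" for j
    using sum_orthonormal_delta[OF on fin that, of "\<lambda>i. w i \<bullet> x"]
    by (simp add: y_def inner_diff_right inner_sum_right inner_commute mult.commute)
  then have "orthogonal y z" if "z \<in> w ` I" for z
    using that by (auto simp: orthogonal_def inner_commute)
  then have "orthogonal y y"
    using span orthogonal_to_span[of y "w ` I" y] by blast
  then have "y = 0" by (simp add: orthogonal_def)
  then show ?thesis by (simp add: y_def)
qed

lemma matrix_eq_on_orthonormal_basis:
  fixes A B :: "real^'m^'n" and w :: "'i \<Rightarrow> real^'m"
  assumes "orthonormal_on I w" "finite I" "card I = CARD('m)"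
    and "\<And>i. i \<in> I \<Longrightarrow> A *v w i = B *v w i"
  shows "A = B"
  unfolding matrix_eq
proof
  fix x
  have expand: "C *v x = (\<Sum>i\<in>I. (w i \<bullet> x) *\<^sub>R (C *v w i))" for C :: "real^'m^'n"
  proof -
    have "C *v x = C *v (\<Sum>i\<in>I. (w i \<bullet> x) *\<^sub>R w i)"
      by (simp only: orthonormal_expansion[OF assms(1-3)])
    then show ?thesis
      by (simp add: matrix_vector_mult_sum_right matrix_vector_mult_scaleR)
  qed
  have "(\<Sum>i\<in>I. (w i \<bullet> x) *\<^sub>R (A *v w i)) = (\<Sum>i\<in>I. (w i \<bullet> x) *\<^sub>R (B *v w i))"
    by (intro sum.cong refl) (simp add: assms(4))
  then show "A *v x = B *v x"
    by (simp only: expand[symmetric])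
qed

lemma matrix_inv_unique:
  fixes A :: "'a::semiring_1^'m^'m"
  assumes "A ** B = mat 1" "B ** A = mat 1"
  shows "matrix_inv A = B"
proof -
  have inv: "A ** matrix_inv A = mat 1 \<and> matrix_inv A ** A = mat 1"
    unfolding matrix_inv_def by (rule someI[of _ B]) (use assms in blast)
  have "matrix_inv A = matrix_inv A ** (A ** B)" using assms by simp
  also have "\<dots> = B" using inv by (simp add: matrix_mul_assoc)
  finally show ?thesis .
qed

definition spectral_matrix :: "'i set \<Rightarrow> ('i \<Rightarrow> real^'m) \<Rightarrow> ('i \<Rightarrow> real) \<Rightarrow> real^'m^'m" where
  "spectral_matrix I w c = (\<Sum>i\<in>I. c i *\<^sub>R outer (w i) (w i))"

lemma spectral_matrix_eq_sum_outer: "spectral_matrix I w c = (\<Sum>i\<in>I. outer (c i *\<^sub>R w i) (w i))"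
  by (simp add: spectral_matrix_def outer_scaleR_left)

lemma transpose_spectral_matrix: "transpose (spectral_matrix I w c) = spectral_matrix I w c"
  by (simp add: spectral_matrix_def transpose_sum transpose_scalar transpose_outer)

lemma spectral_matrix_cong: "(\<And>i. i \<in> I \<Longrightarrow> c i = d i) \<Longrightarrow> spectral_matrix I w c = spectral_matrix I w d"
  unfolding spectral_matrix_def by (rule sum.cong) auto

lemma spectral_matrix_add: "spectral_matrix I w c + spectral_matrix I w d = spectral_matrix I w (\<lambda>i. c i + d i)"
  by (simp add: spectral_matrix_def sum.distrib[symmetric] scaleR_add_left)

lemma scaleR_spectral_matrix: "a *\<^sub>R spectral_matrix I w c = spectral_matrix I w (\<lambda>i. a * c i)"
  by (simp add: spectral_matrix_def scaleR_sum_right)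

lemma spectral_matrix_mult_vector:
  "spectral_matrix I w c *v x = (\<Sum>i\<in>I. (c i * (w i \<bullet> x)) *\<^sub>R w i)"
  by (simp add: spectral_matrix_def matrix_vector_mult_sum_left outer_mult_vector
      scaleR_matrix_vector_assoc[symmetric])

lemma inner_spectral_matrix: "x \<bullet> (spectral_matrix I w c *v x) = (\<Sum>i\<in>I. c i * (w i \<bullet> x)\<^sup>2)"
  by (simp add: spectral_matrix_def matrix_vector_mult_sum_left outer_mult_vector
      scaleR_matrix_vector_assoc[symmetric] inner_sum_right power2_eq_square inner_commute mult.assoc)

context
  fixes I :: "'i set" and w :: "'i \<Rightarrow> real^'m"
  assumes orthonormal: "orthonormal_on I w" and fin: "finite I"
begin

lemma spectral_matrix_mult_eigenvector: "j \<in> I \<Longrightarrow> spectral_matrix I w c *v w j = c j *\<^sub>R w j"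
  using sum_orthonormal_delta[OF orthonormal fin, of j "\<lambda>i. c i *\<^sub>R w i"]
  by (simp add: spectral_matrix_def matrix_vector_mult_sum_left outer_mult_vector
      scaleR_matrix_vector_assoc[symmetric] inner_commute mult.commute)

lemma spectral_matrix_mult:
  "spectral_matrix I w c ** spectral_matrix I w d = spectral_matrix I w (\<lambda>i. c i * d i)"
proof -
  have "spectral_matrix I w c ** spectral_matrix I w d
      = (\<Sum>i\<in>I. c i *\<^sub>R outer (w i) (transpose (spectral_matrix I w d) *v w i))"
    by (simp add: spectral_matrix_def[of I w c] matrix_mult_sum_left matrix_mult_scaleR_left outer_mult_matrix)
  also have "\<dots> = (\<Sum>i\<in>I. c i *\<^sub>R outer (w i) (d i *\<^sub>R w i))"
    by (intro sum.cong refl) (simp add: transpose_spectral_matrix spectral_matrix_mult_eigenvector)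
  finally show ?thesis by (simp add: spectral_matrix_def outer_scaleR_right)
qed

lemma psd_spectral_matrix: "(\<And>i. i \<in> I \<Longrightarrow> c i \<ge> 0) \<Longrightarrow> psd (spectral_matrix I w c)"
  unfolding psd_def inner_spectral_matrix by (auto simp: transpose_spectral_matrix intro!: sum_nonneg)

context
  assumes complete: "card I = CARD('m)"
begin

lemma spectral_matrix_one: "spectral_matrix I w (\<lambda>_. 1) = mat 1"
  by (rule matrix_eq_on_orthonormal_basis[OF orthonormal fin complete])
    (simp add: spectral_matrix_mult_eigenvector)

lemma matrix_inv_spectral_matrix:
  assumes "\<And>i. i \<in> I \<Longrightarrow> c i \<noteq> 0"
  shows "matrix_inv (spectral_matrix I w c) = spectral_matrix I w (\<lambda>i. 1 / c i)"
proof (rule matrix_inv_unique)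
  have "spectral_matrix I w (\<lambda>i. c i * (1 / c i)) = spectral_matrix I w (\<lambda>_. 1)"
    "spectral_matrix I w (\<lambda>i. 1 / c i * c i) = spectral_matrix I w (\<lambda>_. 1)"
    by (rule spectral_matrix_cong, simp add: assms)+
  then show "spectral_matrix I w c ** spectral_matrix I w (\<lambda>i. 1 / c i) = mat 1"
    "spectral_matrix I w (\<lambda>i. 1 / c i) ** spectral_matrix I w c = mat 1"
    by (simp_all only: spectral_matrix_mult spectral_matrix_one)
qed

lemma psd_square_root_unique:
  assumes pos: "\<And>i. i \<in> I \<Longrightarrow> c i > 0" and S: "psd S" "S ** S = spectral_matrix I w c"
  shows "S = spectral_matrix I w (\<lambda>i. sqrt (c i))"
proof (rule matrix_eq_on_orthonormal_basis[OF orthonormal fin complete])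
  fix j assume j: "j \<in> I"
  define s where "s = sqrt (c j)"
  have s: "s > 0" "s * s = c j" using pos[OF j] by (simp_all add: s_def)
  define y where "y = S *v w j - s *\<^sub>R w j"
  have "S *v y + s *\<^sub>R y = (S ** S) *v w j - (s * s) *\<^sub>R w j"
    by (simp add: y_def matrix_vector_mult_diff_distrib matrix_vector_mult_scaleR
        matrix_vector_mul_assoc scaleR_diff_right)
  also have "\<dots> = 0"
    using S(2) s(2) by (simp add: spectral_matrix_mult_eigenvector[OF j])
  finally have "y \<bullet> (S *v y) + s * (y \<bullet> y) = 0"
    by (metis inner_add_right inner_scaleR_right inner_zero_right)
  moreover have "y \<bullet> (S *v y) \<ge> 0" using S(1) by (simp add: psd_def)
  ultimately have "s * (y \<bullet> y) \<le> 0" by linarith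
  then have "y \<bullet> y \<le> 0" using s(1) by (simp add: mult_le_0_iff)
  then have "y = 0" by (metis inner_ge_zero inner_eq_zero_iff order_antisym)
  then show "S *v w j = spectral_matrix I w (\<lambda>i. sqrt (c i)) *v w j"
    by (simp add: y_def s_def spectral_matrix_mult_eigenvector[OF j])
qed

lemma inv_sqrt_spectral_matrix:
  assumes pos: "\<And>i. i \<in> I \<Longrightarrow> c i > 0"
  shows "inv_sqrt (spectral_matrix I w c) = spectral_matrix I w (\<lambda>i. 1 / sqrt (c i))"
  unfolding inv_sqrt_def
proof (rule the_equality)
  have inv: "matrix_inv (spectral_matrix I w c) = spectral_matrix I w (\<lambda>i. 1 / c i)"
    using pos by (simp add: matrix_inv_spectral_matrix less_imp_neq[symmetric])
  show "psd (spectral_matrix I w (\<lambda>i. 1 / sqrt (c i))) \<and>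
      spectral_matrix I w (\<lambda>i. 1 / sqrt (c i)) ** spectral_matrix I w (\<lambda>i. 1 / sqrt (c i))
        = matrix_inv (spectral_matrix I w c)"
    using pos by (auto simp: inv spectral_matrix_mult less_imp_le intro!: psd_spectral_matrix spectral_matrix_cong)
  fix S assume "psd S \<and> S ** S = matrix_inv (spectral_matrix I w c)"
  then show "S = spectral_matrix I w (\<lambda>i. 1 / sqrt (c i))"
    using psd_square_root_unique[of "\<lambda>i. 1 / c i" S] pos
    by (auto simp: inv real_sqrt_divide intro: spectral_matrix_cong)
qed

end

end

section \<open>Eigenvalues of spectral sums\<close>

lemma charpoly_eval: "poly (charpoly A) c = det (mat c - A)"
proof -
  have poly_det: "poly (det M) c = det (\<chi> i j. poly (M$i$j) c)" for M :: "real poly^'n^'n"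
    unfolding det_def by (simp add: poly_sum poly_prod)
  show ?thesis
    unfolding charpoly_def poly_det by (rule arg_cong[where f=det]) (simp add: vec_eq_iff mat_def)
qed

lemma orthonormal_set_extension:
  fixes u :: "'i \<Rightarrow> real^'n"
  assumes on: "orthonormal_on I u" and fin: "finite I"
  obtains S where "u ` I \<subseteq> S" "pairwise orthogonal S" "\<And>x. x \<in> S \<Longrightarrow> x \<bullet> x = 1"
    "finite S" "card S = CARD('n)"
proof -
  define W where "W = {x. \<forall>i\<in>I. u i \<bullet> x = 0}"
  have "subspace W" unfolding subspace_def W_def by (auto simp: inner_add_right)
  then obtain B where B: "B \<subseteq> W" "pairwise orthogonal B" "\<And>x. x \<in> B \<Longrightarrow> norm x = 1" "span B = W"
    using orthonormal_basis_subspace by metis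
  define S where "S = u ` I \<union> B"
  have unit: "x \<bullet> x = 1" if "x \<in> S" for x
    using that B(3) on by (auto simp: S_def orthonormal_on_def norm_eq_1)
  have orth: "pairwise orthogonal S"
    using on B(1,2) unfolding S_def W_def pairwise_def orthogonal_def orthonormal_on_def
    by (auto simp: inner_commute)
  have "0 \<notin> S" using unit by force
  then have indep: "independent S"
    by (rule pairwise_orthogonal_independent[OF orth])
  have "x \<in> span S" for x
  proof -
    define y where "y = x - (\<Sum>i\<in>I. (u i \<bullet> x) *\<^sub>R u i)"
    have "u j \<bullet> y = 0" if "j \<in> I" for j
      using sum_orthonormal_delta[OF on fin that, of "\<lambda>i. u i \<bullet> x"]
      by (simp add: y_def inner_diff_right inner_sum_right inner_commute mult.commute)
    then have "y \<in> span S" using B(4) span_mono[of B S] by (auto simp: W_def S_def)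
    moreover have "(\<Sum>i\<in>I. (u i \<bullet> x) *\<^sub>R u i) \<in> span S"
      by (intro span_sum span_mul span_base) (auto simp: S_def)
    ultimately show ?thesis using span_add unfolding y_def by fastforce
  qed
  then have "card S = CARD('n)"
    using indep by (metis dim_eq_card_independent dim_eq_full DIM_cart DIM_real mult_1_right subset_antisym subset_UNIV subsetI)
  moreover have "finite S" using indep by (simp add: independent_imp_finite)
  ultimately show thesis
    using orth unit by (intro that[of S]) (auto simp: S_def)
qed

lemma orthonormal_extension_to_basis:
  fixes u :: "'i \<Rightarrow> real^'n"
  assumes on: "orthonormal_on I u" and fin: "finite I"
  obtains b :: "'n \<Rightarrow> real^'n" and p :: "'i \<Rightarrow> 'n"
  where "orthonormal_on UNIV b" "inj_on p I" "\<And>i. i \<in> I \<Longrightarrow> b (p i) = u i"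
proof -
  obtain S where S: "u ` I \<subseteq> S" "pairwise orthogonal S" "\<And>x. x \<in> S \<Longrightarrow> x \<bullet> x = 1"
    "finite S" "card S = CARD('n)"
    using orthonormal_set_extension[OF on fin] by blast
  then obtain f where "bij_betw f (UNIV::'n set) S"
    by (metis finite_same_card_bij finite_class.finite_UNIV)
  then have range_f: "range f = S" and inj_f: "inj f" by (auto simp: bij_betw_def)
  show thesis
  proof (rule that[of f "\<lambda>i. inv f (u i)"])
    show "orthonormal_on UNIV f"
      unfolding orthonormal_on_def
    proof (intro ballI)
      fix i j :: 'n
      have "f i \<noteq> f j" if "i \<noteq> j" using that inj_f by (auto simp: inj_def)
      then show "f i \<bullet> f j = (if i = j then 1 else 0)"
        using S(2,3) range_f unfolding pairwise_def orthogonal_def by auto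
    qed
    show fp: "f (inv f (u i)) = u i" if "i \<in> I" for i
    proof -
      have "u i \<in> range f" using that range_f S(1) by blast
      then show ?thesis by (rule f_inv_into_f)
    qed
    show "inj_on (\<lambda>i. inv f (u i)) I"
    proof (rule inj_onI)
      fix i j assume ij: "i \<in> I" "j \<in> I" "inv f (u i) = inv f (u j)"
      then have "u i = u j" using fp by metis
      then show "i = j" using orthonormal_on_inj[OF on] ij(1,2) by (simp add: inj_on_eq_iff)
    qed
  qed
qed

lemma proots_charpoly_orthonormal_eigenbasis:
  fixes A :: "real^'n^'n" and b :: "'n \<Rightarrow> real^'n"
  assumes on: "orthonormal_on UNIV b" and eig: "\<And>j. A *v b j = ev j *\<^sub>R b j"
  shows "proots (charpoly A) = (\<Sum>j\<in>UNIV. {#ev j#})"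
proof -
  define Q :: "real^'n^'n" where "Q = (\<chi> i j. b j $ i)"
  have entry: "(transpose Q ** M ** Q) $ i $ j = b i \<bullet> (M *v b j)" for M i j
    unfolding Q_def
    apply (simp add: matrix_matrix_mult_def transpose_def matrix_vector_mult_def inner_vec_def
        sum_distrib_left sum_distrib_right)
    apply (rule trans[OF sum.swap])
    by (simp add: algebra_simps)
  have "(transpose Q ** Q) $ i $ j = b i \<bullet> b j" for i j
    using entry[of "mat 1"] by simp
  then have "transpose Q ** Q = mat 1"
    using on by (simp add: vec_eq_iff mat_def orthonormal_on_def)
  then have detQ: "det (transpose Q) * det Q = 1"
    by (metis det_I det_mul)
  have "poly (charpoly A) c = (\<Prod>j\<in>UNIV. c - ev j)" for c
  proof -
    have diag: "(transpose Q ** (mat c - A) ** Q) $ i $ j = (if i = j then c - ev j else 0)" for i j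
    proof -
      have "mat c *v x = c *\<^sub>R x" for x :: "real^'n"
        by (simp add: mat_def matrix_vector_mult_def vec_eq_iff if_distrib[of "\<lambda>z. z * _"] cong: if_cong)
      then have "(mat c - A) *v b j = (c - ev j) *\<^sub>R b j"
        by (simp add: matrix_vector_mult_diff_rdistrib eig scaleR_diff_left)
      then show ?thesis using on by (simp add: entry orthonormal_on_def)
    qed
    have "det (mat c - A) = det (transpose Q ** (mat c - A) ** Q)"
      using detQ by (simp add: det_mul)
    also have "\<dots> = (\<Prod>j\<in>UNIV. c - ev j)"
      by (subst det_diagonal) (simp_all add: diag)
    finally show ?thesis by (simp add: charpoly_eval)
  qed
  then have "charpoly A = (\<Prod>j\<in>UNIV. [:- ev j, 1:])"
    by (intro poly_ext) (simp add: poly_prod)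
  then show ?thesis by (simp add: proots_prod)
qed

lemma sum_mset_singletons_upto: "(\<Sum>i\<in>{1..r}. {#d i#}) = mset (map d [1..<r+1])"
proof (induction r)
  case (Suc r)
  have "{1..Suc r} = insert (Suc r) {1..r}" by auto
  then show ?case using Suc by (simp add: add.commute)
qed simp

lemma sum_mset_singleton_const: "(\<Sum>x\<in>A. {#c#}) = replicate_mset (card A) c"
  by (induction A rule: infinite_finite_induct) auto

lemma eigval_eq_if_proots_charpoly:
  assumes roots: "proots (charpoly A) = mset (map d [1..<r+1]) + replicate_mset m 0"
    and dec: "\<forall>i\<in>{1..r}. \<forall>j\<in>{1..r}. i \<le> j \<longrightarrow> d j \<le> d i"
    and nonneg: "\<forall>i\<in>{1..r}. d i \<ge> 0"
    and k: "k \<in> {1..r}"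
  shows "eigval k A = d k"
proof -
  define xs where "xs = replicate m 0 @ rev (map d [1..<r+1])"
  have "sorted (rev (map d [1..<r+1]))"
    using dec by (auto simp: sorted_iff_nth_mono_less rev_nth simp del: upt_Suc)
  moreover have "\<forall>y\<in>set (rev (map d [1..<r+1])). 0 \<le> y"
    using nonneg by (auto simp del: upt_Suc)
  ultimately have "sorted xs" by (auto simp: xs_def sorted_append)
  moreover have "proots (charpoly A) = mset xs"
    by (simp add: roots xs_def add.commute del: upt_Suc)
  ultimately have "eigval k A = rev xs ! (k - 1)"
    by (simp add: eigval_def sorted_sort_id)
  also have "\<dots> = d k"
  proof -
    have "k - 1 < r" using k by auto
    moreover have "rev xs = map d [1..<r+1] @ replicate m 0" by (simp add: xs_def)
    ultimately show ?thesis using k by (simp add: nth_append del: upt_Suc)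
  qed
  finally show ?thesis .
qed

lemma eigval_spectral_matrix:
  fixes u :: "nat \<Rightarrow> real^'n"
  assumes on: "orthonormal_on {1..r} u"
    and dec: "\<forall>i\<in>{1..r}. \<forall>j\<in>{1..r}. i \<le> j \<longrightarrow> d j \<le> d i"
    and nonneg: "\<forall>i\<in>{1..r}. d i \<ge> 0"
    and k: "k \<in> {1..r}"
  shows "eigval k (spectral_matrix {1..r} u d) = d k"
proof -
  obtain b :: "'n \<Rightarrow> real^'n" and p where b: "orthonormal_on UNIV b" and p: "inj_on p {1..r}"
    and bp: "\<And>i. i \<in> {1..r} \<Longrightarrow> b (p i) = u i"
    using orthonormal_extension_to_basis[OF on] by blast
  define ev where "ev j = (if j \<in> p ` {1..r} then d (inv_into {1..r} p j) else 0)" for j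
  have "spectral_matrix {1..r} u d *v b j = ev j *\<^sub>R b j" for j
  proof (cases "j \<in> p ` {1..r}")
    case True
    then obtain m where m: "m \<in> {1..r}" "j = p m" by blast
    then show ?thesis
      using p bp spectral_matrix_mult_eigenvector[OF on _ m(1)] by (simp add: ev_def)
  next
    case False
    have "u i \<bullet> b j = 0" if "i \<in> {1..r}" for i
    proof -
      have "p i \<noteq> j" using False that by blast
      then have "b (p i) \<bullet> b j = 0" using b by (simp add: orthonormal_on_def)
      then show ?thesis using bp[OF that] by simp
    qed
    then show ?thesis
      using False by (simp add: spectral_matrix_mult_vector ev_def)
  qed
  then have "proots (charpoly (spectral_matrix {1..r} u d)) = (\<Sum>j\<in>UNIV. {#ev j#})"
    by (rule proots_charpoly_orthonormal_eigenbasis[OF b])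
  also have "\<dots> = (\<Sum>j\<in>p ` {1..r}. {#ev j#}) + (\<Sum>j\<in>UNIV - p ` {1..r}. {#0#})"
    by (subst sum.subset_diff[of "p ` {1..r}"]) (auto simp: ev_def intro!: sum.cong)
  also have "(\<Sum>j\<in>p ` {1..r}. {#ev j#}) = (\<Sum>i\<in>{1..r}. {#d i#})"
    using p by (simp add: sum.reindex ev_def)
  also have "(\<Sum>j\<in>UNIV - p ` {1..r}. {#0::real#}) = replicate_mset (CARD('n) - r) 0"
    using p by (simp add: sum_mset_singleton_const card_Diff_subset card_image)
  finally show ?thesis
    using eigval_eq_if_proots_charpoly dec nonneg k by (metis sum_mset_singletons_upto)
qed

section \<open>Gradients and Hessians\<close>

lemma grad_eqI:
  assumes "(f has_derivative (\<lambda>h. g \<bullet> h)) (at x)"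
  shows "grad f x = g"
  unfolding grad_def
proof (rule the_equality)
  fix g' assume "(f has_derivative (\<lambda>h. g' \<bullet> h)) (at x)"
  then have "(\<lambda>h. g' \<bullet> h) = (\<lambda>h. g \<bullet> h)" using assms has_derivative_unique by blast
  then have "(g' - g) \<bullet> (g' - g) = 0" by (metis inner_diff_left right_minus_eq)
  then show "g' = g" by simp
qed (rule assms)

lemma grad_eq_0_at_minimum:
  assumes "(f has_derivative (\<lambda>h. grad f x \<bullet> h)) (at x)" and "\<forall>y. f x \<le> f y"
  shows "grad f x = 0"
proof -
  have "(\<lambda>h. grad f x \<bullet> h) = (\<lambda>h. 0)"
    by (rule has_derivative_local_min[OF assms(1)]) (use assms(2) in auto)
  then have "grad f x \<bullet> grad f x = 0" by metis
  then show ?thesis by simp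
qed

lemma second_difference_mean_value:
  fixes \<phi> :: "'a::real_inner \<Rightarrow> real"
  assumes d1: "\<And>x. (\<phi> has_derivative (\<lambda>v. g x \<bullet> v)) (at x)" and s: "s > 0"
  obtains \<tau> where "0 < \<tau>" "\<tau> < s"
    "\<phi> (a + s *\<^sub>R h + s *\<^sub>R k) - \<phi> (a + s *\<^sub>R h) - \<phi> (a + s *\<^sub>R k) + \<phi> a
      = s * ((g (a + s *\<^sub>R h + \<tau> *\<^sub>R k) - g (a + \<tau> *\<^sub>R k)) \<bullet> k)"
proof -
  define \<gamma> where "\<gamma> t = \<phi> (a + s *\<^sub>R h + t *\<^sub>R k) - \<phi> (a + t *\<^sub>R k)" for t
  have der: "(\<gamma> has_derivative (\<lambda>dt. g (a + s *\<^sub>R h + t *\<^sub>R k) \<bullet> (dt *\<^sub>R k) - g (a + t *\<^sub>R k) \<bullet> (dt *\<^sub>R k))) (at t)" for t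
  proof -
    have l1: "((\<lambda>t. a + s *\<^sub>R h + t *\<^sub>R k) has_derivative (\<lambda>dt. dt *\<^sub>R k)) (at t)"
      and l2: "((\<lambda>t. a + t *\<^sub>R k) has_derivative (\<lambda>dt. dt *\<^sub>R k)) (at t)"
      by (auto intro!: derivative_eq_intros)
    show ?thesis
      unfolding \<gamma>_def
      by (rule has_derivative_diff[OF has_derivative_compose[OF l1 d1] has_derivative_compose[OF l2 d1]])
  qed
  then have "continuous_on {0..s} \<gamma>"
    by (meson continuous_at_imp_continuous_on has_derivative_continuous)
  then obtain \<tau> where "0 < \<tau>" "\<tau> < s"
    "\<gamma> s - \<gamma> 0 = g (a + s *\<^sub>R h + \<tau> *\<^sub>R k) \<bullet> ((s - 0) *\<^sub>R k) - g (a + \<tau> *\<^sub>R k) \<bullet> ((s - 0) *\<^sub>R k)"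
    using mvt[OF s _ der] by blast
  then show thesis
    by (intro that[of \<tau>]) (simp_all add: \<gamma>_def inner_diff_left algebra_simps)
qed

lemma second_difference_estimate:
  fixes \<phi> :: "'a::real_inner \<Rightarrow> real"
  assumes d1: "\<And>x. (\<phi> has_derivative (\<lambda>v. g x \<bullet> v)) (at x)"
    and lin: "linear H"
    and approx: "\<And>y. norm (y - a) < d \<Longrightarrow> norm (g y - g a - H (y - a)) \<le> e * norm (y - a)"
    and s: "s > 0" "s * (norm h + norm k) < d" and e: "e \<ge> 0"
  shows "\<bar>\<phi> (a + s *\<^sub>R h + s *\<^sub>R k) - \<phi> (a + s *\<^sub>R h) - \<phi> (a + s *\<^sub>R k) + \<phi> a - s\<^sup>2 * (H h \<bullet> k)\<bar>
          \<le> e * s\<^sup>2 * (norm k * (norm h + 2 * norm k))"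
proof -
  obtain \<tau> where \<tau>: "0 < \<tau>" "\<tau> < s" and mv:
    "\<phi> (a + s *\<^sub>R h + s *\<^sub>R k) - \<phi> (a + s *\<^sub>R h) - \<phi> (a + s *\<^sub>R k) + \<phi> a
      = s * ((g (a + s *\<^sub>R h + \<tau> *\<^sub>R k) - g (a + \<tau> *\<^sub>R k)) \<bullet> k)"
    using second_difference_mean_value[OF d1 s(1)] by blast
  define y1 where "y1 = a + s *\<^sub>R h + \<tau> *\<^sub>R k"
  define y2 where "y2 = a + \<tau> *\<^sub>R k"
  define err where "err = (g y1 - g a - H (y1 - a)) - (g y2 - g a - H (y2 - a))"
  have n1: "norm (y1 - a) \<le> s * norm h + \<tau> * norm k" and n2: "norm (y2 - a) = \<tau> * norm k"
    unfolding y1_def y2_def using s \<tau> by (simp_all add: norm_triangle_le)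
  moreover have "\<tau> * norm k \<le> s * norm k" using \<tau> by (simp add: mult_right_mono)
  moreover have "0 \<le> s * norm h" "s * norm h + s * norm k < d"
    using s by (simp_all add: algebra_simps)
  ultimately have b1: "norm (y1 - a) < d" and b2: "norm (y2 - a) < d"
    by linarith+
  have "norm err \<le> e * norm (y1 - a) + e * norm (y2 - a)"
    unfolding err_def using approx[OF b1] approx[OF b2] norm_triangle_ineq4 by (smt (verit))
  also have "\<dots> = e * (norm (y1 - a) + norm (y2 - a))" by (simp add: algebra_simps)
  also have "\<dots> \<le> e * (s * (norm h + 2 * norm k))"
  proof (rule mult_left_mono[OF _ e])
    have "norm (y1 - a) + norm (y2 - a) \<le> s * norm h + 2 * (s * norm k)"
      using n1 n2 \<open>\<tau> * norm k \<le> s * norm k\<close> by linarith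
    then show "norm (y1 - a) + norm (y2 - a) \<le> s * (norm h + 2 * norm k)"
      by (simp add: algebra_simps)
  qed
  finally have nerr: "norm err \<le> e * (s * (norm h + 2 * norm k))" .
  have "g y1 - g y2 = s *\<^sub>R H h + err"
    using lin unfolding err_def y1_def y2_def by (simp add: linear_add linear_scale algebra_simps)
  then have "\<phi> (a + s *\<^sub>R h + s *\<^sub>R k) - \<phi> (a + s *\<^sub>R h) - \<phi> (a + s *\<^sub>R k) + \<phi> a - s\<^sup>2 * (H h \<bullet> k)
      = s * (err \<bullet> k)"
    unfolding mv y1_def[symmetric] y2_def[symmetric] by (simp add: inner_add_left power2_eq_square algebra_simps)
  also have "\<bar>s * (err \<bullet> k)\<bar> \<le> s * (norm err * norm k)"
    using s by (simp add: abs_mult Cauchy_Schwarz_ineq2)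
  also have "\<dots> \<le> s * (e * (s * (norm h + 2 * norm k)) * norm k)"
    using mult_right_mono[OF nerr norm_ge_zero[of k]] s by (simp add: mult_left_mono)
  finally show ?thesis by (simp add: power2_eq_square algebra_simps)
qed

text \<open>Schwarz's theorem: both orders of the second difference approximate the Hessian form.\<close>
lemma hessian_symmetric:
  fixes \<phi> :: "'a::real_inner \<Rightarrow> real"
  assumes d1: "\<And>x. (\<phi> has_derivative (\<lambda>v. g x \<bullet> v)) (at x)"
    and d2: "(g has_derivative H) (at a)"
  shows "H h \<bullet> k = H k \<bullet> h"
proof (rule ccontr)
  assume "H h \<bullet> k \<noteq> H k \<bullet> h"
  then have gap: "\<bar>H h \<bullet> k - H k \<bullet> h\<bar> > 0" by simp
  define C where "C = norm k * (norm h + 2 * norm k) + norm h * (norm k + 2 * norm h) + 1"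
  have C: "C > 0" unfolding C_def by (simp add: add_nonneg_pos)
  define e where "e = \<bar>H h \<bullet> k - H k \<bullet> h\<bar> / (2 * C)"
  have e: "e > 0" using gap C by (simp add: e_def)
  have lin: "linear H" using has_derivative_bounded_linear[OF d2] bounded_linear.linear by blast
  obtain d where d: "d > 0"
    and approx: "\<And>y. norm (y - a) < d \<Longrightarrow> norm (g y - g a - H (y - a)) \<le> e * norm (y - a)"
    using d2 e unfolding has_derivative_at_alt by blast
  define s where "s = d / (2 * (norm h + norm k + 1))"
  have s: "s > 0" using d by (simp add: s_def add_nonneg_pos)
  have "s * (norm h + norm k) \<le> s * (norm h + norm k + 1)" using s by simp
  also have "\<dots> = d / 2"
    using add_nonneg_pos[of "norm h + norm k" 1] by (simp add: s_def field_simps)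
  finally have small: "s * (norm h + norm k) < d" using d by simp
  define \<Delta> where "\<Delta> = \<phi> (a + s *\<^sub>R h + s *\<^sub>R k) - \<phi> (a + s *\<^sub>R h) - \<phi> (a + s *\<^sub>R k) + \<phi> a"
  have "\<bar>\<Delta> - s\<^sup>2 * (H h \<bullet> k)\<bar> \<le> e * s\<^sup>2 * (norm k * (norm h + 2 * norm k))"
    unfolding \<Delta>_def by (rule second_difference_estimate[OF d1 lin approx s small less_imp_le[OF e]])
  moreover have "\<bar>\<Delta> - s\<^sup>2 * (H k \<bullet> h)\<bar> \<le> e * s\<^sup>2 * (norm h * (norm k + 2 * norm h))"
    using second_difference_estimate[OF d1 lin approx s small[unfolded add.commute[of "norm h"]] less_imp_le[OF e]]
    by (simp add: \<Delta>_def add_ac)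
  moreover have "(\<Delta> - s\<^sup>2 * (H k \<bullet> h)) - (\<Delta> - s\<^sup>2 * (H h \<bullet> k)) = s\<^sup>2 * (H h \<bullet> k - H k \<bullet> h)"
    by (simp add: algebra_simps)
  moreover have "\<bar>s\<^sup>2 * (H h \<bullet> k - H k \<bullet> h)\<bar> = s\<^sup>2 * \<bar>H h \<bullet> k - H k \<bullet> h\<bar>"
    by (simp add: abs_mult)
  moreover have "e * s\<^sup>2 * (norm k * (norm h + 2 * norm k)) + e * s\<^sup>2 * (norm h * (norm k + 2 * norm h))
      = s\<^sup>2 * (e * (C - 1))"
    by (simp add: C_def algebra_simps)
  ultimately have "s\<^sup>2 * \<bar>H h \<bullet> k - H k \<bullet> h\<bar> \<le> s\<^sup>2 * (e * (C - 1))"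
    by (smt (verit) abs_triangle_ineq4)
  also have "\<dots> < s\<^sup>2 * (e * C)" using s e by simp
  also have "\<dots> = s\<^sup>2 * (\<bar>H h \<bullet> k - H k \<bullet> h\<bar> / 2)" using C by (simp add: e_def)
  finally show False using s gap by simp
qed

lemma derivative_norm_le_lipschitz:
  fixes g :: "'a::real_normed_vector \<Rightarrow> 'b::real_normed_vector"
  assumes d: "(g has_derivative H) (at a)"
    and lip: "\<And>M E. norm (g (M + E) - g M) \<le> L * norm E"
  shows "norm (H w) \<le> L * norm w"
proof (cases "w = 0")
  case True
  then show ?thesis
    using has_derivative_bounded_linear[OF d] by (simp add: bounded_linear.linear linear_0)
next
  case False
  then have nw: "norm w > 0" by simp
  have lin: "linear H" using has_derivative_bounded_linear[OF d] bounded_linear.linear by blast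
  show ?thesis
  proof (rule field_le_epsilon)
    fix e :: real assume e: "e > 0"
    obtain d where d: "d > 0" and approx:
      "\<And>y. norm (y - a) < d \<Longrightarrow> norm (g y - g a - H (y - a)) \<le> e / norm w * norm (y - a)"
      using d e nw unfolding has_derivative_at_alt by (meson divide_pos_pos)
    define t where "t = d / (2 * norm w)"
    have t: "t > 0" "norm ((a + t *\<^sub>R w) - a) < d" using d nw by (simp_all add: t_def)
    have "t * norm (H w) = norm (t *\<^sub>R H w)" using t by simp
    also have "\<dots> \<le> norm (g (a + t *\<^sub>R w) - g a) + norm (g (a + t *\<^sub>R w) - g a - t *\<^sub>R H w)"
      by (metis norm_triangle_ineq4 diff_diff_eq2 add_diff_cancel_left' norm_minus_commute)
    also have "\<dots> \<le> L * (t * norm w) + e / norm w * (t * norm w)"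
      using lip[of a "t *\<^sub>R w"] approx[OF t(2)] t lin by (simp add: linear_scale add_mono)
    also have "\<dots> = t * (L * norm w + e)" using nw by (simp add: algebra_simps)
    finally show "norm (H w) \<le> L * norm w + e" using t by simp
  qed
qed

lemma polarization_lower_bound:
  fixes H :: "'a::real_inner \<Rightarrow> 'a"
  assumes lin: "linear H" and sym: "\<And>x y. H x \<bullet> y = H y \<bullet> x"
    and E: "E \<noteq> 0" and Z: "Z \<noteq> 0"
    and lower: "\<mu> * (norm (E /\<^sub>R norm E + Z /\<^sub>R norm Z))\<^sup>2
        \<le> H (E /\<^sub>R norm E + Z /\<^sub>R norm Z) \<bullet> (E /\<^sub>R norm E + Z /\<^sub>R norm Z)"
    and upper: "H (E /\<^sub>R norm E - Z /\<^sub>R norm Z) \<bullet> (E /\<^sub>R norm E - Z /\<^sub>R norm Z)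
        \<le> L * (norm (E /\<^sub>R norm E - Z /\<^sub>R norm Z))\<^sup>2"
  shows "(\<mu> + L) * (E \<bullet> Z) - (L - \<mu>) * (norm E * norm Z) \<le> 2 * (H E \<bullet> Z)"
proof -
  define e where "e = E /\<^sub>R norm E"
  define z where "z = Z /\<^sub>R norm Z"
  have "norm e = 1" "norm z = 1" using E Z by (simp_all add: e_def z_def)
  then have unit: "e \<bullet> e = 1" "z \<bullet> z = 1" by (simp_all add: norm_eq_1)
  have sq: "(norm (e + z))\<^sup>2 = 2 + 2 * (e \<bullet> z)" "(norm (e - z))\<^sup>2 = 2 - 2 * (e \<bullet> z)"
    using unit by (simp_all add: power2_norm_eq_inner algebra_simps inner_commute)
  have quad: "H (e + z) \<bullet> (e + z) = H e \<bullet> e + 2 * (H e \<bullet> z) + H z \<bullet> z"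
    "H (e - z) \<bullet> (e - z) = H e \<bullet> e - 2 * (H e \<bullet> z) + H z \<bullet> z"
    using lin sym[of z e] by (simp_all add: linear_add linear_diff algebra_simps)
  have "\<mu> * (2 + 2 * (e \<bullet> z)) \<le> H e \<bullet> e + 2 * (H e \<bullet> z) + H z \<bullet> z"
    "H e \<bullet> e - 2 * (H e \<bullet> z) + H z \<bullet> z \<le> L * (2 - 2 * (e \<bullet> z))"
    using lower upper unfolding e_def[symmetric] z_def[symmetric] sq quad by simp_all
  then have "(\<mu> + L) * (e \<bullet> z) - (L - \<mu>) \<le> 2 * (H e \<bullet> z)"
    by (simp add: algebra_simps)
  then have "norm E * norm Z * ((\<mu> + L) * (e \<bullet> z) - (L - \<mu>)) \<le> norm E * norm Z * (2 * (H e \<bullet> z))"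
    by (simp add: mult_left_mono)
  moreover have "E \<bullet> Z = norm E * norm Z * (e \<bullet> z)" "H E \<bullet> Z = norm E * norm Z * (H e \<bullet> z)"
    using E Z lin by (simp_all add: e_def z_def linear_scale field_simps)
  ultimately show ?thesis by (simp add: algebra_simps)
qed

lemma bounded_bilinear_mult_transpose:
  "bounded_bilinear (\<lambda>(A::real^'k^'n) (B::real^'k^'m). A ** transpose B)"
proof -
  have "bilinear (\<lambda>(A::real^'k^'n) (B::real^'k^'m). A ** transpose B)"
    unfolding bilinear_def linear_iff
    by (simp add: matrix_add_ldistrib matrix_add_rdistrib transpose_add transpose_scalar
        matrix_mult_scaleR_left matrix_mult_scaleR_right)
  then show ?thesis by (simp add: bilinear_conv_bounded_bilinear)
qed

lemma inner_grad_gram_comp: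
  fixes \<phi> :: "real^'n^'n \<Rightarrow> real" and X :: "real^'r^'n"
  assumes "(\<phi> has_derivative (\<lambda>h. grad \<phi> (X ** transpose X) \<bullet> h)) (at (X ** transpose X))"
  shows "grad (\<lambda>Z::real^'r^'n. \<phi> (Z ** transpose Z)) X \<bullet> Y = grad \<phi> (X ** transpose X) \<bullet> sym_prod X Y"
proof -
  define G where "G = grad \<phi> (X ** transpose X)"
  have chain: "G \<bullet> (X ** transpose H + H ** transpose X) = ((G + transpose G) ** X) \<bullet> H" for H
  proof -
    have "G \<bullet> (X ** transpose H) = (transpose G ** X) \<bullet> H"
      by (simp add: inner_matrix_mult_right inner_transpose_right matrix_transpose_mul)
    moreover have "G \<bullet> (H ** transpose X) = (G ** X) \<bullet> H"
      by (simp add: inner_matrix_mult_left)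
    ultimately show ?thesis
      by (simp add: inner_add_right matrix_add_rdistrib inner_add_left)
  qed
  have "((\<lambda>Z::real^'r^'n. Z ** transpose Z) has_derivative (\<lambda>H. X ** transpose H + H ** transpose X)) (at X)"
    using bounded_bilinear.FDERIV[OF bounded_bilinear_mult_transpose has_derivative_ident
        has_derivative_ident, of X UNIV]
    by simp
  from has_derivative_compose[OF this assms]
  have "((\<lambda>Z::real^'r^'n. \<phi> (Z ** transpose Z)) has_derivative (\<lambda>H. ((G + transpose G) ** X) \<bullet> H)) (at X)"
    by (simp add: G_def[symmetric] chain)
  then have "grad (\<lambda>Z::real^'r^'n. \<phi> (Z ** transpose Z)) X = (G + transpose G) ** X"
    by (rule grad_eqI)
  then show ?thesis by (simp add: chain sym_prod_def G_def[symmetric])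
qed

section \<open>Curvature along low-rank directions\<close>

text \<open>The rank condition of restricted strong convexity is verified by exhibiting a single
  subspace of small dimension that contains all the relevant column spaces.\<close>
definition maps_into :: "real^'c^'n \<Rightarrow> (real^'n) set \<Rightarrow> bool" where
  "maps_into A V \<longleftrightarrow> (\<forall>x. A *v x \<in> V)"

lemma rank_le_dim_if_maps_into: "maps_into A V \<Longrightarrow> rank A \<le> dim V"
  unfolding maps_into_def rank_dim_range by (metis dim_subset image_subset_iff)

lemma maps_into_add: "subspace V \<Longrightarrow> maps_into A V \<Longrightarrow> maps_into B V \<Longrightarrow> maps_into (A + B) V"
  unfolding maps_into_def by (simp add: matrix_vector_mult_add_rdistrib subspace_add)

lemma maps_into_diff: "subspace V \<Longrightarrow> maps_into A V \<Longrightarrow> maps_into B V \<Longrightarrow> maps_into (A - B) V"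
  unfolding maps_into_def by (simp add: matrix_vector_mult_diff_rdistrib subspace_diff)

lemma maps_into_scaleR: "subspace V \<Longrightarrow> maps_into A V \<Longrightarrow> maps_into (c *\<^sub>R A) V"
  unfolding maps_into_def by (simp add: scaleR_matrix_vector_assoc[symmetric] subspace_scale)

lemma maps_into_mult: "maps_into A V \<Longrightarrow> maps_into (A ** B) V"
  unfolding maps_into_def by (metis matrix_vector_mul_assoc)

lemma maps_into_spectral_matrix:
  "subspace V \<Longrightarrow> (\<And>i. i \<in> I \<Longrightarrow> w i \<in> V) \<Longrightarrow> maps_into (spectral_matrix I w c) V"
  unfolding maps_into_def spectral_matrix_mult_vector by (simp add: subspace_sum subspace_scale)

lemma subspace_containing_column_space:
  fixes u :: "'i \<Rightarrow> real^'n" and M :: "real^'c^'n"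
  assumes "rank M \<le> r" "finite I" "card I \<le> r"
  obtains V where "subspace V" "dim V \<le> 2 * r" "\<And>i. i \<in> I \<Longrightarrow> u i \<in> V" "maps_into M V"
proof -
  obtain B where B: "B \<subseteq> columns M" "independent B" "columns M \<subseteq> span B" "card B = dim (columns M)"
    using basis_exists by blast
  define V where "V = span (u ` I \<union> B)"
  have "dim V \<le> card (u ` I \<union> B)"
    unfolding V_def using B(2) assms(2) by (intro dim_le_card) (auto simp: independent_imp_finite)
  also have "\<dots> \<le> card (u ` I) + card B" by (rule card_Un_le)
  also have "\<dots> \<le> 2 * r"
    using assms card_image_le[OF assms(2), of u] B(4) column_rank_def[of M] by linarith
  finally have "dim V \<le> 2 * r" .
  moreover have "maps_into M V"
    unfolding maps_into_def V_def
    using matrix_vector_mult_in_columnspace B(3) span_mono[of B "u ` I \<union> B"]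
    by (metis span_minimal span_span subspace_span Un_upper2 subset_iff)
  ultimately show ?thesis
    by (intro that[of V]) (auto simp: V_def span_base)
qed

lemma grad_has_derivative:
  "twice_differentiable \<phi> \<Longrightarrow> (\<phi> has_derivative (\<lambda>h. grad \<phi> x \<bullet> h)) (at x)"
  unfolding twice_differentiable_def by blast

lemma hess_has_derivative: "twice_differentiable \<phi> \<Longrightarrow> (grad \<phi> has_derivative hess \<phi> x) (at x)"
  unfolding twice_differentiable_def hess_def by (simp add: frechet_derivative_works)

lemma linear_hess: "twice_differentiable \<phi> \<Longrightarrow> linear (hess \<phi> x)"
  using has_derivative_bounded_linear[OF hess_has_derivative] bounded_linear.linear by blast

lemma hess_symmetric: "twice_differentiable \<phi> \<Longrightarrow> hess \<phi> x h \<bullet> k = hess \<phi> x k \<bullet> h"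
  by (rule hessian_symmetric[OF grad_has_derivative hess_has_derivative])

lemma hess_quadratic_le:
  assumes "twice_differentiable \<phi>" "grad_lipschitz L \<phi>"
  shows "hess \<phi> x E \<bullet> E \<le> L * (norm E)\<^sup>2"
proof -
  have "hess \<phi> x E \<bullet> E \<le> norm (hess \<phi> x E) * norm E" by (rule norm_cauchy_schwarz)
  also have "\<dots> \<le> L * norm E * norm E"
    using derivative_norm_le_lipschitz[OF hess_has_derivative[OF assms(1)]] assms(2)
    by (simp add: grad_lipschitz_def mult_right_mono)
  finally show ?thesis by (simp add: power2_eq_square mult.assoc)
qed

lemma grad_difference_mean_value:
  assumes "twice_differentiable \<phi>"
  obtains \<xi> where "0 < \<xi>" "\<xi> < 1" "(grad \<phi> (M + D) - grad \<phi> M) \<bullet> Z = hess \<phi> (M + \<xi> *\<^sub>R D) D \<bullet> Z"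
proof -
  define \<gamma> where "\<gamma> t = grad \<phi> (M + t *\<^sub>R D) \<bullet> Z" for t
  have der: "(\<gamma> has_derivative (\<lambda>dt. hess \<phi> (M + t *\<^sub>R D) (dt *\<^sub>R D) \<bullet> Z)) (at t)" for t
  proof -
    have "((\<lambda>t. M + t *\<^sub>R D) has_derivative (\<lambda>dt. dt *\<^sub>R D)) (at t)"
      by (auto intro!: derivative_eq_intros)
    from has_derivative_compose[OF this hess_has_derivative[OF assms]] show ?thesis
      unfolding \<gamma>_def by (rule bounded_linear.has_derivative[OF bounded_linear_inner_left])
  qed
  then have "continuous_on {0..1} \<gamma>"
    by (meson continuous_at_imp_continuous_on has_derivative_continuous)
  from mvt[OF zero_less_one this der] obtain \<xi> where "0 < \<xi>" "\<xi> < 1"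
    "\<gamma> 1 - \<gamma> 0 = hess \<phi> (M + \<xi> *\<^sub>R D) ((1 - 0) *\<^sub>R D) \<bullet> Z"
    by blast
  then show thesis by (intro that[of \<xi>]) (simp_all add: \<gamma>_def inner_diff_left)
qed

text \<open>The mean value theorem reduces the claim to the Hessian at a point of the segment
  \<open>[M\<^sub>0, M\<^sub>0 + D]\<close>; polarization of \<open>\<mu> \<le> \<nabla>\<^sup>2\<phi> \<le> L\<close> between the unit vectors of \<open>D\<close> and \<open>Z\<close> then
  gives the bound.\<close>
lemma grad_inner_lower_bound:
  fixes \<phi> :: "real^'n^'n \<Rightarrow> real"
  assumes twice: "twice_differentiable \<phi>" and lip: "grad_lipschitz L \<phi>"
    and rsc: "restricted_strongly_convex \<mu> m \<phi>"
    and V: "subspace V" "dim V \<le> m"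
    and M0: "maps_into M0 V" "grad \<phi> M0 = 0" and D: "maps_into D V" and Z: "maps_into Z V"
  shows "(\<mu> + L) * (D \<bullet> Z) - (L - \<mu>) * (norm D * norm Z) \<le> 2 * (grad \<phi> (M0 + D) \<bullet> Z)"
proof (cases "D = 0 \<or> Z = 0")
  case True
  then show ?thesis using M0(2) by auto
next
  case False
  obtain \<xi> where grad_eq: "(grad \<phi> (M0 + D) - grad \<phi> M0) \<bullet> Z = hess \<phi> (M0 + \<xi> *\<^sub>R D) D \<bullet> Z"
    using grad_difference_mean_value[OF twice] by blast
  define E where "E = D /\<^sub>R norm D + Z /\<^sub>R norm Z"
  have "rank (M0 + \<xi> *\<^sub>R D) \<le> m" "rank E \<le> m"
    using V M0(1) D Z unfolding E_def
    by (meson maps_into_add maps_into_scaleR rank_le_dim_if_maps_into le_trans)+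
  then have "\<mu> * (norm E)\<^sup>2 \<le> hess \<phi> (M0 + \<xi> *\<^sub>R D) E \<bullet> E"
    using rsc by (simp add: restricted_strongly_convex_def)
  then have "(\<mu> + L) * (D \<bullet> Z) - (L - \<mu>) * (norm D * norm Z) \<le> 2 * (hess \<phi> (M0 + \<xi> *\<^sub>R D) D \<bullet> Z)"
    using False unfolding E_def
    by (intro polarization_lower_bound linear_hess hess_quadratic_le twice lip)
      (auto intro: hess_symmetric[OF twice])
  then show ?thesis using grad_eq M0(2) by simp
qed

lemma grad_lipschitz_nonneg:
  fixes \<phi> :: "real^'n^'n \<Rightarrow> real"
  assumes "grad_lipschitz L \<phi>"
  shows "L \<ge> 0"
proof -
  have "(mat 1 :: real^'n^'n) $ i $ i = 1" for i by (simp add: mat_def)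
  then have "(mat 1 :: real^'n^'n) \<noteq> 0" by (metis zero_index zero_neq_one)
  then have "norm (mat 1 :: real^'n^'n) > 0" by simp
  moreover have "0 \<le> L * norm (mat 1 :: real^'n^'n)"
    using assms norm_ge_zero order_trans unfolding grad_lipschitz_def by blast
  ultimately show ?thesis by (simp add: zero_le_mult_iff)
qed

lemma restricted_convexity_le_lipschitz:
  fixes \<phi> :: "real^'n^'n \<Rightarrow> real"
  assumes "twice_differentiable \<phi>" "grad_lipschitz L \<phi>" "restricted_strongly_convex \<mu> m \<phi>" "m \<ge> 1"
  shows "\<mu> \<le> L"
proof -
  obtain a :: "real^'n" where a: "a \<noteq> 0" using vector_choose_size[of 1] by (metis norm_zero zero_neq_one)
  define E where "E = outer a a"
  have "maps_into E (span {a})" "maps_into 0 (span {a})"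
    by (simp_all add: maps_into_def E_def outer_mult_vector span_base span_mul span_zero)
  moreover have "dim (span {a}) \<le> m" using a assms(4) by simp
  ultimately have "rank E \<le> m" "rank (0::real^'n^'n) \<le> m"
    using rank_le_dim_if_maps_into le_trans by blast+
  then have "\<mu> * (norm E)\<^sup>2 \<le> L * (norm E)\<^sup>2"
    using assms(3) hess_quadratic_le[OF assms(1,2), of 0 E]
    by (smt (verit) restricted_strongly_convex_def)
  moreover have "norm E > 0" using a by (simp add: E_def norm_outer)
  ultimately show ?thesis by simp
qed

section \<open>Compressing a symmetric matrix off a projector\<close>

lemma norm_add_transpose_ge:
  fixes W :: "real^'n^'n"
  assumes "W \<bullet> transpose W \<ge> 0"
  shows "2 * (norm W)\<^sup>2 \<le> (norm (W + transpose W))\<^sup>2"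
proof -
  have "(norm (W + transpose W))\<^sup>2 = W \<bullet> W + 2 * (W \<bullet> transpose W) + transpose W \<bullet> transpose W"
    by (simp add: power2_norm_eq_inner inner_add_left inner_add_right inner_commute)
  then show ?thesis using assms by (simp add: power2_norm_eq_inner inner_transpose_transpose)
qed

context
  fixes P D :: "real^'n^'n"
  assumes P_sym: "transpose P = P" and P_idem: "P ** P = P" and D_sym: "transpose D = D"
begin

lemma inner_compression_tangent:
  assumes "P ** A = A"
  shows "((mat 1 - P) ** D ** (mat 1 - P)) \<bullet> sym_prod A Y = 0"
proof -
  have IPA: "(mat 1 - P) ** A = 0" using assms by (simp add: matrix_diff_rdistrib)
  have "transpose A ** (mat 1 - P) = transpose ((mat 1 - P) ** A)"
    by (simp add: matrix_transpose_mul transpose_diff P_sym)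
  then have left: "transpose A ** ((mat 1 - P) ** D ** (mat 1 - P)) = 0"
    by (simp add: matrix_mul_assoc IPA)
  have right: "(mat 1 - P) ** D ** (mat 1 - P) ** A = 0"
    by (simp add: matrix_mul_assoc[symmetric] IPA)
  have "((mat 1 - P) ** D ** (mat 1 - P)) \<bullet> (A ** transpose Y) = 0"
    by (simp add: inner_matrix_mult_right left)
  moreover have "((mat 1 - P) ** D ** (mat 1 - P)) \<bullet> (Y ** transpose A) = 0"
    by (simp add: inner_matrix_mult_left right)
  ultimately show ?thesis by (simp add: sym_prod_def inner_add_right)
qed

lemma transpose_compression_part:
  "transpose ((D - (1/2) *\<^sub>R (P ** D)) ** P) = P ** D - (1/2) *\<^sub>R (P ** D ** P)"
  using D_sym P_sym
  by (simp add: matrix_diff_rdistrib matrix_mult_scaleR_left transpose_diff transpose_scalar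
      matrix_transpose_mul matrix_mul_assoc)

lemma compression_split:
  defines "W \<equiv> (D - (1/2) *\<^sub>R (P ** D)) ** P"
  shows "D = (mat 1 - P) ** D ** (mat 1 - P) + (W + transpose W)"
proof -
  have "W + transpose W = D ** P + P ** D - ((1/2) *\<^sub>R (P ** D ** P) + (1/2) *\<^sub>R (P ** D ** P))"
    unfolding transpose_compression_part[folded W_def] unfolding W_def
    by (simp add: matrix_diff_rdistrib matrix_mult_scaleR_left matrix_mul_assoc algebra_simps)
  also have "\<dots> = D ** P + P ** D - P ** D ** P"
    by (simp flip: scaleR_add_left)
  finally show ?thesis
    by (simp add: matrix_diff_rdistrib matrix_diff_ldistrib matrix_mul_assoc P_idem algebra_simps)
qed

text \<open>The cross term equals \<open>\<parallel>PDP\<parallel>\<^sup>2/4\<close>.\<close>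
lemma inner_compression_part_transpose_nonneg:
  defines "W \<equiv> (D - (1/2) *\<^sub>R (P ** D)) ** P"
  shows "W \<bullet> transpose W \<ge> 0"
proof -
  define F where "F = P ** D ** P"
  have W: "W = D ** P - (1/2) *\<^sub>R F"
    unfolding W_def F_def by (simp add: matrix_diff_rdistrib matrix_mult_scaleR_left matrix_mul_assoc)
  have WT: "transpose W = P ** D - (1/2) *\<^sub>R F"
    unfolding W_def F_def by (rule transpose_compression_part)
  have FP: "F ** P = F" and PF: "P ** F = F"
    unfolding F_def by (simp_all add: matrix_mul_assoc[symmetric] P_idem) (simp add: matrix_mul_assoc P_idem)
  have "(D ** P) \<bullet> (P ** D) = F \<bullet> D" "(D ** P) \<bullet> F = F \<bullet> D" "F \<bullet> (P ** D) = F \<bullet> D" "F \<bullet> F = F \<bullet> D"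
  proof -
    show "(D ** P) \<bullet> (P ** D) = F \<bullet> D"
      using inner_matrix_mult_right[of "D ** P" P D] by (simp add: P_sym F_def matrix_mul_assoc)
    show "(D ** P) \<bullet> F = F \<bullet> D"
      using inner_matrix_mult_left[of F D P] by (simp add: inner_commute P_sym FP)
    show "F \<bullet> (P ** D) = F \<bullet> D"
      using inner_matrix_mult_right[of F P D] by (simp add: P_sym PF)
    have "F \<bullet> F = F \<bullet> (P ** (D ** P))" by (simp add: F_def matrix_mul_assoc)
    also have "\<dots> = (transpose P ** F) \<bullet> (D ** P)" by (rule inner_matrix_mult_right)
    also have "\<dots> = (F ** transpose P) \<bullet> D" by (simp add: P_sym PF inner_matrix_mult_left)
    finally show "F \<bullet> F = F \<bullet> D" by (simp add: P_sym FP)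
  qed
  then have "W \<bullet> transpose W = (1/4) * (F \<bullet> F)"
    unfolding WT unfolding W by (simp add: inner_diff_left inner_diff_right algebra_simps)
  then show ?thesis using inner_ge_zero[of F] by linarith
qed

end

section \<open>Cosines of the angle between a matrix and a linear family\<close>

lemma cosine_bounds:
  fixes T :: "'a \<Rightarrow> 'b::real_inner"
  assumes "T Y \<noteq> 0"
  shows "-1 \<le> D \<bullet> T Y / (norm D * norm (T Y))" "D \<bullet> T Y / (norm D * norm (T Y)) \<le> 1"
proof -
  have "\<bar>D \<bullet> T Y\<bar> \<le> norm D * norm (T Y)" by (rule Cauchy_Schwarz_ineq2)
  then have "\<bar>D \<bullet> T Y / (norm D * norm (T Y))\<bar> \<le> 1"
    using assms by (cases "D = 0") (simp_all add: abs_div divide_le_eq_1)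
  then show "-1 \<le> D \<bullet> T Y / (norm D * norm (T Y))" "D \<bullet> T Y / (norm D * norm (T Y)) \<le> 1"
    by linarith+
qed

lemma Sup_cosine_ge:
  fixes T :: "'a \<Rightarrow> 'b::real_inner"
  assumes "T Y0 \<noteq> 0"
  shows "-1 \<le> Sup {D \<bullet> T Y / (norm D * norm (T Y)) | Y. T Y \<noteq> 0}"
proof -
  have "bdd_above {D \<bullet> T Y / (norm D * norm (T Y)) | Y. T Y \<noteq> 0}"
    using cosine_bounds(2) by (auto intro!: bdd_aboveI)
  then show ?thesis
    using assms cosine_bounds(1)[of T Y0 D] by (auto intro: cSup_upper2)
qed

lemma Sup_cosine_le:
  fixes T :: "'a \<Rightarrow> 'b::real_inner"
  assumes "T Y0 \<noteq> 0" "D \<noteq> 0" "\<And>Y. D \<bullet> T Y = Z \<bullet> T Y"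
  shows "Sup {D \<bullet> T Y / (norm D * norm (T Y)) | Y. T Y \<noteq> 0} \<le> norm Z / norm D"
proof (rule cSup_least)
  show "{D \<bullet> T Y / (norm D * norm (T Y)) | Y. T Y \<noteq> 0} \<noteq> {}" using assms(1) by blast
  fix c assume "c \<in> {D \<bullet> T Y / (norm D * norm (T Y)) | Y. T Y \<noteq> 0}"
  then obtain Y where c: "c = D \<bullet> T Y / (norm D * norm (T Y))" and "T Y \<noteq> 0" by blast
  have "D \<bullet> T Y \<le> norm Z * norm (T Y)"
    using assms(3) norm_cauchy_schwarz by metis
  then show "c \<le> norm Z / norm D"
    using \<open>T Y \<noteq> 0\<close> assms(2) by (simp add: c divide_le_eq field_simps)
qed

lemma angle_bound_arith:
  fixes a d z y g q c L \<mu> :: real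
  assumes a: "0 \<le> a" and d: "0 < d" and z: "0 \<le> z" and q: "0 < q"
    and L: "0 \<le> L" "\<mu> \<le> L" and c: "-1 \<le> c" "c \<le> z / d"
    and dual: "g \<le> a * y" and y: "y * sqrt 2 \<le> q * z"
    and curv: "(\<mu> + L) * z\<^sup>2 - (L - \<mu>) * (d * z) \<le> 2 * g"
  shows "(\<mu> + L) / sqrt 2 * (c - (L - \<mu>) / (L + \<mu>)) / q \<le> a / d"
proof -
  define \<delta> where "\<delta> = (L - \<mu>) / (L + \<mu>)"
  define s :: real where "s = sqrt 2"
  have s: "0 < s" "s * s = 2" by (simp_all add: s_def)
  have rhs: "0 \<le> s * q * (a / d)" using a d q s by simp
  have "(\<mu> + L) * (c - \<delta>) \<le> s * q * (a / d)"
  proof (cases "\<mu> + L > 0")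
    case False
    show ?thesis
    proof (cases "\<mu> + L = 0")
      case True
      then show ?thesis using rhs by simp
    next
      case nonzero: False
      with \<open>\<not> \<mu> + L > 0\<close> have "(c + 1) * (\<mu> + L) \<le> 0"
        using c(1) by (simp add: mult_nonneg_nonpos)
      moreover have "\<delta> * (\<mu> + L) = L - \<mu>"
        using nonzero by (simp add: \<delta>_def add.commute)
      moreover have "(\<mu> + L) * (c - \<delta>) = (c + 1) * (\<mu> + L) - (\<mu> + L) - \<delta> * (\<mu> + L)"
        by (simp add: algebra_simps)
      ultimately show ?thesis using rhs L(1) by linarith
    qed
  next
    case True
    have "L + \<mu> > 0" using True by linarith
    then have "\<delta> \<ge> 0" using L unfolding \<delta>_def by simp
    have "c - \<delta> \<le> z / d - \<delta>" using c(2) by linarith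
    then have "(\<mu> + L) * (c - \<delta>) \<le> (\<mu> + L) * (z / d - \<delta>)"
      using True by (simp only: mult_le_cancel_left_pos)
    also have "\<dots> \<le> s * q * (a / d)"
    proof (cases "z = 0")
      case True
      then have "(\<mu> + L) * (z / d - \<delta>) = - ((\<mu> + L) * \<delta>)" by simp
      moreover have "0 \<le> (\<mu> + L) * \<delta>" using \<open>\<delta> \<ge> 0\<close> \<open>\<mu> + L > 0\<close> by simp
      ultimately show ?thesis using rhs by linarith
    next
      case False
      then have dz: "0 < d * z" using d z by simp
      have "(\<mu> + L) * \<delta> = L - \<mu>" using \<open>L + \<mu> > 0\<close> by (simp add: \<delta>_def add.commute)
      have "(\<mu> + L) * (z / d - \<delta>) * (d * z) = (\<mu> + L) * z\<^sup>2 - ((\<mu> + L) * \<delta>) * (d * z)"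
        using d by (simp add: field_simps power2_eq_square)
      also have "\<dots> = (\<mu> + L) * z\<^sup>2 - (L - \<mu>) * (d * z)"
        by (simp only: \<open>(\<mu> + L) * \<delta> = L - \<mu>\<close>)
      also have "\<dots> \<le> a * (2 * y)" using curv dual by simp
      also have "\<dots> \<le> a * (s * (q * z))"
      proof (rule mult_left_mono[OF _ a])
        have "s * (y * s) \<le> s * (q * z)" using y s by (simp add: s_def)
        moreover have "s * (y * s) = (s * s) * y" by (simp only: mult_ac)
        ultimately show "2 * y \<le> s * (q * z)" using s(2) by simp
      qed
      also have "\<dots> = s * q * (a / d) * (d * z)" using d by (simp add: field_simps)
      finally show ?thesis using dz by (rule mult_right_le_imp_le)
    qed
    finally show ?thesis .
  qed
  then have "(\<mu> + L) * (c - \<delta>) / (s * q) \<le> a / d"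
    using s q by (simp add: divide_le_eq mult.commute mult.left_commute)
  then show ?thesis by (simp add: \<delta>_def s_def)
qed

section \<open>The compact singular value decomposition\<close>

locale compact_svd =
  fixes X :: "real^'r^'n" and \<sigma> :: "nat \<Rightarrow> real" and u :: "nat \<Rightarrow> real^'n" and v :: "nat \<Rightarrow> real^'r"
  assumes svd: "X = (\<Sum>i=1..CARD('r). \<sigma> i *\<^sub>R outer (u i) (v i))"
    and orthonormal_u: "orthonormal_on {1..CARD('r)} u"
    and orthonormal_v: "orthonormal_on {1..CARD('r)} v"
    and \<sigma>_nonneg: "\<forall>i\<in>{1..CARD('r)}. 0 \<le> \<sigma> i"
    and \<sigma>_decreasing: "\<forall>i\<in>{1..CARD('r)}. \<forall>j\<in>{1..CARD('r)}. i \<le> j \<longrightarrow> \<sigma> j \<le> \<sigma> i"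
begin

definition truncation :: "nat \<Rightarrow> real^'r^'n" where
  "truncation k = (\<Sum>i=1..k. \<sigma> i *\<^sub>R outer (u i) (v i))"

definition top_projector :: "nat \<Rightarrow> real^'n^'n" where
  "top_projector k = spectral_matrix {1..k} u (\<lambda>_. 1)"

text \<open>The factor direction \<open>Y\<close> solving \<open>X Y\<^sup>T = (B P\<^sub>k)\<^sup>T\<close>, where \<open>P\<^sub>k\<close> is \<open>top_projector k\<close>.\<close>
definition pullback :: "nat \<Rightarrow> real^'n^'n \<Rightarrow> real^'r^'n" where
  "pullback k B = (\<Sum>i=1..k. outer ((1 / \<sigma> i) *\<^sub>R (B *v u i)) (v i))"

definition sqrt_shifted_gram :: "real \<Rightarrow> real^'r^'r" where
  "sqrt_shifted_gram \<eta> = spectral_matrix {1..CARD('r)} v (\<lambda>i. sqrt ((\<sigma> i)\<^sup>2 + \<eta>))"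

lemma truncation_eq_sum_outer: "truncation k = (\<Sum>i\<in>{1..k}. outer (\<sigma> i *\<^sub>R u i) (v i))"
  by (simp add: truncation_def outer_scaleR_left)

lemma X_eq_truncation: "X = truncation CARD('r)"
  using svd by (simp add: truncation_def)

lemma \<sigma>_pos_upto: "k \<in> {1..CARD('r)} \<Longrightarrow> 0 < \<sigma> k \<Longrightarrow> i \<in> {1..k} \<Longrightarrow> 0 < \<sigma> i"
  using \<sigma>_decreasing by (metis atLeastAtMost_iff le_trans less_le_trans)

lemma gram_eq: "X ** transpose X = spectral_matrix {1..CARD('r)} u (\<lambda>i. (\<sigma> i)\<^sup>2)"
proof -
  have "X ** transpose X = (\<Sum>i\<in>{1..CARD('r)}. outer (\<sigma> i *\<^sub>R u i) (\<sigma> i *\<^sub>R u i))"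
    unfolding X_eq_truncation truncation_eq_sum_outer
    by (rule sum_outer_mult_transpose[OF orthonormal_v finite_atLeastAtMost order_refl])
  then show ?thesis
    by (simp add: spectral_matrix_eq_sum_outer outer_scaleR_left outer_scaleR_right power2_eq_square)
qed

lemma gram_transpose_eq: "transpose X ** X = spectral_matrix {1..CARD('r)} v (\<lambda>i. (\<sigma> i)\<^sup>2)"
proof -
  have tX: "transpose X = (\<Sum>i\<in>{1..CARD('r)}. outer (\<sigma> i *\<^sub>R v i) (u i))"
    by (simp add: X_eq_truncation truncation_def transpose_sum transpose_scalar transpose_outer
        outer_scaleR_left)
  have "transpose X ** X = transpose X ** transpose (transpose X)" by simp
  also have "\<dots> = (\<Sum>i\<in>{1..CARD('r)}. outer (\<sigma> i *\<^sub>R v i) (\<sigma> i *\<^sub>R v i))"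
    unfolding tX by (rule sum_outer_mult_transpose[OF orthonormal_u finite_atLeastAtMost order_refl])
  finally show ?thesis
    by (simp add: spectral_matrix_eq_sum_outer outer_scaleR_left outer_scaleR_right power2_eq_square)
qed

lemma eigval_gram: "k \<in> {1..CARD('r)} \<Longrightarrow> eigval k (X ** transpose X) = (\<sigma> k)\<^sup>2"
  unfolding gram_eq using \<sigma>_decreasing \<sigma>_nonneg
  by (intro eigval_spectral_matrix[OF orthonormal_u]) (auto intro: power_mono)

lemma transpose_top_projector: "transpose (top_projector k) = top_projector k"
  by (simp add: top_projector_def transpose_spectral_matrix)

context
  fixes k assumes k: "k \<le> CARD('r)"
begin

lemma orthonormal_u_upto: "orthonormal_on {1..k} u"
  and orthonormal_v_upto: "orthonormal_on {1..k} v"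
  using k orthonormal_u orthonormal_v by (auto intro: orthonormal_on_subset)

lemma truncation_gram_nonzero:
  assumes "1 \<le> k" "0 < \<sigma> k"
  shows "sym_prod (truncation k) (truncation k) \<noteq> 0"
proof -
  have "truncation k *v v k = \<sigma> k *\<^sub>R u k"
    using sum_orthonormal_delta[OF orthonormal_v_upto finite_atLeastAtMost, of k "\<lambda>i. \<sigma> i *\<^sub>R u i"]
      assms(1)
    by (simp add: truncation_eq_sum_outer matrix_vector_mult_sum_left outer_mult_vector inner_commute)
  moreover have "u k \<bullet> u k = 1"
    using orthonormal_u assms(1) k by (simp add: orthonormal_on_def)
  ultimately have "truncation k \<noteq> 0" using assms(2) by auto
  then show ?thesis by (simp add: sym_prod_def gram_eq_0_iff flip: scaleR_2)
qed

lemma top_projector_idem: "top_projector k ** top_projector k = top_projector k"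
  unfolding top_projector_def spectral_matrix_mult[OF orthonormal_u_upto finite_atLeastAtMost] by simp

lemma top_projector_eigenvector: "i \<in> {1..k} \<Longrightarrow> top_projector k *v u i = u i"
  using spectral_matrix_mult_eigenvector[OF orthonormal_u_upto finite_atLeastAtMost, of i "\<lambda>_. 1"]
  by (simp add: top_projector_def)

lemma top_projector_mult_truncation: "top_projector k ** truncation k = truncation k"
  unfolding truncation_eq_sum_outer matrix_mult_sum_right matrix_mult_outer
  by (intro sum.cong refl) (simp add: matrix_vector_mult_scaleR top_projector_eigenvector)

lemma sum_outer_mult_transpose_pullback:
  assumes "k \<le> m" "m \<le> CARD('r)" "\<forall>i\<in>{1..k}. \<sigma> i \<noteq> 0"
  shows "(\<Sum>i\<in>{1..m}. outer (\<sigma> i *\<^sub>R u i) (v i)) ** transpose (pullback k B)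
    = transpose (B ** top_projector k)"
proof -
  have "(\<Sum>i\<in>{1..m}. outer (\<sigma> i *\<^sub>R u i) (v i)) ** transpose (pullback k B)
      = (\<Sum>i\<in>{1..k}. outer (\<sigma> i *\<^sub>R u i) ((1 / \<sigma> i) *\<^sub>R (B *v u i)))"
    unfolding pullback_def using assms(1,2) orthonormal_v
    by (intro sum_outer_mult_transpose) (auto intro: orthonormal_on_subset)
  also have "\<dots> = (\<Sum>i\<in>{1..k}. outer (u i) (B *v u i))"
    using assms(3) by (intro sum.cong refl) (simp add: outer_scaleR_left outer_scaleR_right)
  also have "\<dots> = transpose (B ** top_projector k)"
    by (simp add: top_projector_def spectral_matrix_def matrix_mult_sum_right matrix_mult_scaleR_right
        matrix_mult_outer transpose_sum transpose_outer)
  finally show ?thesis .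
qed

end

lemma shifted_gram_eq:
  "transpose X ** X + \<eta> *\<^sub>R mat 1 = spectral_matrix {1..CARD('r)} v (\<lambda>i. (\<sigma> i)\<^sup>2 + \<eta>)"
proof -
  have "mat 1 = spectral_matrix {1..CARD('r)} v (\<lambda>_. 1)"
    using spectral_matrix_one[OF orthonormal_v finite_atLeastAtMost] by simp
  then show ?thesis
    by (simp add: gram_transpose_eq scaleR_spectral_matrix spectral_matrix_add)
qed

lemma shifted_gram_pos:
  assumes "pd (transpose X ** X + \<eta> *\<^sub>R mat 1)" "i \<in> {1..CARD('r)}"
  shows "0 < (\<sigma> i)\<^sup>2 + \<eta>"
proof -
  have "v i \<bullet> v i = 1" using orthonormal_v assms(2) by (simp add: orthonormal_on_def)
  moreover have "(transpose X ** X + \<eta> *\<^sub>R mat 1) *v v i = ((\<sigma> i)\<^sup>2 + \<eta>) *\<^sub>R v i"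
    unfolding shifted_gram_eq
    by (rule spectral_matrix_mult_eigenvector[OF orthonormal_v finite_atLeastAtMost assms(2)])
  ultimately show ?thesis
    using assms(1) unfolding pd_def by (metis inner_scaleR_right mult.right_neutral inner_zero_left
        zero_neq_one)
qed

lemma inner_le_dual_local_norm:
  assumes pd: "pd (transpose X ** X + \<eta> *\<^sub>R mat 1)"
  shows "V \<bullet> Y \<le> dual_local_norm V X \<eta> * norm (Y ** sqrt_shifted_gram \<eta>)"
proof -
  define S where "S = spectral_matrix {1..CARD('r)} v (\<lambda>i. 1 / sqrt ((\<sigma> i)\<^sup>2 + \<eta>))"
  have S: "inv_sqrt (transpose X ** X + \<eta> *\<^sub>R mat 1) = S"
    unfolding shifted_gram_eq S_def using shifted_gram_pos[OF pd]
    by (intro inv_sqrt_spectral_matrix[OF orthonormal_v finite_atLeastAtMost]) simp_all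
  have "sqrt_shifted_gram \<eta> ** S = spectral_matrix {1..CARD('r)} v (\<lambda>_. 1)"
    unfolding sqrt_shifted_gram_def S_def spectral_matrix_mult[OF orthonormal_v finite_atLeastAtMost]
  proof (rule spectral_matrix_cong)
    fix i assume "i \<in> {1..CARD('r)}"
    then have "0 < (\<sigma> i)\<^sup>2 + \<eta>" by (rule shifted_gram_pos[OF pd])
    then show "sqrt ((\<sigma> i)\<^sup>2 + \<eta>) * (1 / sqrt ((\<sigma> i)\<^sup>2 + \<eta>)) = 1" by simp
  qed
  then have TS: "sqrt_shifted_gram \<eta> ** S = mat 1"
    using spectral_matrix_one[OF orthonormal_v finite_atLeastAtMost] by simp
  have "V \<bullet> Y = V \<bullet> ((Y ** sqrt_shifted_gram \<eta>) ** S)"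
    by (simp add: matrix_mul_assoc[symmetric] TS)
  also have "\<dots> = (V ** S) \<bullet> (Y ** sqrt_shifted_gram \<eta>)"
    by (simp add: inner_matrix_mult_left S_def transpose_spectral_matrix)
  also have "\<dots> \<le> norm (V ** S) * norm (Y ** sqrt_shifted_gram \<eta>)"
    by (rule norm_cauchy_schwarz)
  finally show ?thesis by (simp add: dual_local_norm_def S)
qed

lemma norm_pullback_sqrt_shifted_gram_le:
  assumes k: "k \<in> {1..CARD('r)}" "0 < \<sigma> k" and \<eta>: "0 \<le> \<eta>"
  shows "norm (pullback k B ** sqrt_shifted_gram \<eta>) \<le> sqrt (1 + \<eta> / (\<sigma> k)\<^sup>2) * norm (B ** top_projector k)"
proof -
  define q where "q i = sqrt ((\<sigma> i)\<^sup>2 + \<eta>) / \<sigma> i" for i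
  have kr: "k \<le> CARD('r)" using k by simp
  have Tv: "transpose (sqrt_shifted_gram \<eta>) *v v i = sqrt ((\<sigma> i)\<^sup>2 + \<eta>) *\<^sub>R v i" if "i \<in> {1..k}" for i
    using that kr unfolding sqrt_shifted_gram_def transpose_spectral_matrix
    by (intro spectral_matrix_mult_eigenvector[OF orthonormal_v finite_atLeastAtMost]) auto
  have YT: "pullback k B ** sqrt_shifted_gram \<eta> = (\<Sum>i\<in>{1..k}. outer (q i *\<^sub>R (B *v u i)) (v i))"
    unfolding pullback_def matrix_mult_sum_left outer_mult_matrix
  proof (intro sum.cong refl)
    fix i assume "i \<in> {1..k}"
    then show "outer ((1 / \<sigma> i) *\<^sub>R (B *v u i)) (transpose (sqrt_shifted_gram \<eta>) *v v i)
        = outer (q i *\<^sub>R (B *v u i)) (v i)"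
      unfolding Tv[OF \<open>i \<in> {1..k}\<close>] by (simp add: q_def outer_scaleR_left outer_scaleR_right)
  qed
  have "(norm (pullback k B ** sqrt_shifted_gram \<eta>))\<^sup>2 = (\<Sum>i\<in>{1..k}. (norm (q i *\<^sub>R (B *v u i)))\<^sup>2)"
    unfolding YT by (rule norm_sum_outer[OF orthonormal_v_upto[OF kr] finite_atLeastAtMost])
  also have "\<dots> = (\<Sum>i\<in>{1..k}. (q i)\<^sup>2 * (norm (B *v u i))\<^sup>2)"
    by (simp add: power_mult_distrib)
  also have "\<dots> \<le> (\<Sum>i\<in>{1..k}. (1 + \<eta> / (\<sigma> k)\<^sup>2) * (norm (B *v u i))\<^sup>2)"
  proof (intro sum_mono mult_right_mono)
    fix i assume i: "i \<in> {1..k}"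
    then have "0 < \<sigma> k" "\<sigma> k \<le> \<sigma> i" using k \<sigma>_decreasing by auto
    then have "\<eta> / (\<sigma> i)\<^sup>2 \<le> \<eta> / (\<sigma> k)\<^sup>2"
      using \<eta> by (intro divide_left_mono power_mono mult_pos_pos) auto
    then show "(q i)\<^sup>2 \<le> 1 + \<eta> / (\<sigma> k)\<^sup>2"
      using \<open>0 < \<sigma> k\<close> \<open>\<sigma> k \<le> \<sigma> i\<close> \<eta> by (simp add: q_def power_divide add_divide_distrib)
  qed simp
  also have "\<dots> = (sqrt (1 + \<eta> / (\<sigma> k)\<^sup>2) * norm (B ** top_projector k))\<^sup>2"
    using k \<eta> norm_sum_outer[OF orthonormal_u_upto, of k "\<lambda>i. B *v u i"]
    by (simp add: top_projector_def spectral_matrix_def matrix_mult_sum_right matrix_mult_scaleR_right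
        matrix_mult_outer power_mult_distrib sum_distrib_left)
  finally show ?thesis
    by (rule power2_le_imp_le) (use \<eta> in \<open>simp add: add_nonneg_nonneg\<close>)
qed

lemma norm_pullback_compression_le:
  fixes D :: "real^'n^'n"
  assumes k: "k \<in> {1..CARD('r)}" "0 < \<sigma> k" and D: "transpose D = D" and \<eta>: "0 \<le> \<eta>"
  defines "P \<equiv> top_projector k"
  defines "W \<equiv> (D - (1/2) *\<^sub>R (P ** D)) ** P"
  shows "norm (pullback k (D - (1/2) *\<^sub>R (P ** D)) ** sqrt_shifted_gram \<eta>) * sqrt 2
    \<le> sqrt (1 + \<eta> / (\<sigma> k)\<^sup>2) * norm (W + transpose W)"
proof -
  have P: "transpose P = P" "P ** P = P"
    unfolding P_def using k by (simp_all add: transpose_top_projector top_projector_idem)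
  have "norm (pullback k (D - (1/2) *\<^sub>R (P ** D)) ** sqrt_shifted_gram \<eta>) \<le> sqrt (1 + \<eta> / (\<sigma> k)\<^sup>2) * norm W"
    using norm_pullback_sqrt_shifted_gram_le[OF k \<eta>] by (simp add: W_def P_def)
  moreover have "(norm W * sqrt 2)\<^sup>2 \<le> (norm (W + transpose W))\<^sup>2"
    using norm_add_transpose_ge[OF inner_compression_part_transpose_nonneg[OF P D, folded W_def]]
    by (simp add: power_mult_distrib mult.commute)
  then have "norm W * sqrt 2 \<le> norm (W + transpose W)" by (rule power2_le_imp_le) simp
  then have "sqrt (1 + \<eta> / (\<sigma> k)\<^sup>2) * norm W * sqrt 2 \<le> sqrt (1 + \<eta> / (\<sigma> k)\<^sup>2) * norm (W + transpose W)"
    using \<eta> by (simp add: mult.assoc mult_left_mono add_nonneg_nonneg)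
  ultimately show ?thesis
    by (meson mult_right_mono order_trans real_sqrt_ge_zero zero_le_numeral)
qed

text \<open>The direction of the paper: with \<open>P = P\<^sub>k\<close>, \<open>Y\<close> is the pullback of \<open>D - PD/2\<close>, so that
  \<open>XY\<^sup>T + YX\<^sup>T = DP + PD - PDP\<close> is what remains of \<open>D\<close> after removing its compression
  \<open>(I - P) D (I - P)\<close>, which is orthogonal to every \<open>X\<^sub>kY'\<^sup>T + Y'X\<^sub>k\<^sup>T\<close>.\<close>
lemma descent_direction:
  fixes D :: "real^'n^'n"
  assumes k: "k \<in> {1..CARD('r)}" "0 < \<sigma> k" and D: "transpose D = D" and \<eta>: "0 \<le> \<eta>"
  obtains Y Z where "sym_prod X Y = Z"
    "\<And>Y'. D \<bullet> sym_prod (truncation k) Y' = Z \<bullet> sym_prod (truncation k) Y'"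
    "D \<bullet> Z = (norm Z)\<^sup>2"
    "norm (Y ** sqrt_shifted_gram \<eta>) * sqrt 2 \<le> sqrt (1 + \<eta> / (\<sigma> k)\<^sup>2) * norm Z"
    "\<And>V. subspace V \<Longrightarrow> (\<And>i. i \<in> {1..CARD('r)} \<Longrightarrow> u i \<in> V) \<Longrightarrow> maps_into D V \<Longrightarrow> maps_into Z V"
proof -
  define P where "P = top_projector k"
  define W where "W = (D - (1/2) *\<^sub>R (P ** D)) ** P"
  define Y where "Y = pullback k (D - (1/2) *\<^sub>R (P ** D))"
  have kr: "k \<le> CARD('r)" using k by simp
  have \<sigma>: "\<forall>i\<in>{1..k}. \<sigma> i \<noteq> 0"
    using \<sigma>_pos_upto[OF k] by (metis less_irrefl)
  have P: "transpose P = P" "P ** P = P" "P ** truncation k = truncation k"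
    unfolding P_def using kr
    by (simp_all add: transpose_top_projector top_projector_idem top_projector_mult_truncation)
  have XY: "X ** transpose Y = transpose W" "truncation k ** transpose Y = transpose W"
    using kr \<sigma> sum_outer_mult_transpose_pullback[of k]
    by (simp_all add: X_eq_truncation truncation_eq_sum_outer Y_def W_def P_def)
  then have YX: "Y ** transpose X = W" "Y ** transpose (truncation k) = W"
    by (metis matrix_transpose_mul transpose_transpose)+
  have sym: "sym_prod X Y = W + transpose W" "sym_prod (truncation k) Y = W + transpose W"
    by (simp_all add: sym_prod_def XY YX add.commute)
  have tangent: "D \<bullet> sym_prod (truncation k) Y' = (W + transpose W) \<bullet> sym_prod (truncation k) Y'" for Y'
  proof -
    have "D \<bullet> sym_prod (truncation k) Y'
        = ((mat 1 - P) ** D ** (mat 1 - P) + (W + transpose W)) \<bullet> sym_prod (truncation k) Y'"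
      by (rule arg_cong[where f = "\<lambda>M. M \<bullet> sym_prod (truncation k) Y'",
            OF compression_split[OF P(1,2) D, folded W_def]])
    then show ?thesis using inner_compression_tangent[OF P(1,2) D P(3)] by (simp add: inner_add_left)
  qed
  show thesis
  proof (rule that[of Y "W + transpose W"])
    show "D \<bullet> (W + transpose W) = (norm (W + transpose W))\<^sup>2"
      using tangent[of Y] by (simp add: sym(2) power2_norm_eq_inner)
    show "norm (Y ** sqrt_shifted_gram \<eta>) * sqrt 2 \<le> sqrt (1 + \<eta> / (\<sigma> k)\<^sup>2) * norm (W + transpose W)"
      using norm_pullback_compression_le[OF k D \<eta>] by (simp add: Y_def W_def P_def)
    fix V assume V: "subspace V" "\<And>i. i \<in> {1..CARD('r)} \<Longrightarrow> u i \<in> V" "maps_into D V"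
    have PV: "maps_into P V"
      unfolding P_def top_projector_def using kr V by (intro maps_into_spectral_matrix) auto
    show "maps_into (W + transpose W) V"
      unfolding W_def transpose_compression_part[OF P(1,2) D]
      by (intro maps_into_add maps_into_diff maps_into_scaleR maps_into_mult) (simp_all add: V PV)
  qed (simp_all add: sym(1) tangent)
qed

lemma residual_subspace:
  assumes "rank M \<le> CARD('r)"
  obtains V where "subspace V" "dim V \<le> 2 * CARD('r)" "\<And>i. i \<in> {1..CARD('r)} \<Longrightarrow> u i \<in> V"
    "maps_into M V" "maps_into (X ** transpose X - M) V"
proof -
  obtain V where V: "subspace V" "dim V \<le> 2 * CARD('r)" "\<And>i. i \<in> {1..CARD('r)} \<Longrightarrow> u i \<in> V"
    "maps_into M V"
    using subspace_containing_column_space[OF assms, of "{1..CARD('r)}" u] by auto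
  moreover have "maps_into (X ** transpose X - M) V"
    unfolding gram_eq using V by (intro maps_into_diff maps_into_spectral_matrix) auto
  ultimately show thesis by (rule that)
qed

end

theorem lemma25:
  fixes \<phi> :: "real^'n^'n \<Rightarrow> real"
    and L \<mu> \<eta> :: real
    and Mstar :: "real^'n^'n"
    and X :: "real^'r^'n"
    and \<sigma> :: "nat \<Rightarrow> real" and u :: "nat \<Rightarrow> real^'n" and v :: "nat \<Rightarrow> real^'r"
  defines "r \<equiv> CARD('r)"
  defines "f \<equiv> (\<lambda>Z::real^'r^'n. \<phi> (Z ** transpose Z))"
  defines "Xk \<equiv> (\<lambda>k. \<Sum>i=1..k. \<sigma> i *\<^sub>R outer (u i) (v i))"
  defines "D \<equiv> X ** transpose X - Mstar"
  defines "\<delta> \<equiv> (L - \<mu>) / (L + \<mu>)"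
  defines "cos\<theta> \<equiv> (\<lambda>k. Sup {(D \<bullet> (Xk k ** transpose Y + Y ** transpose (Xk k))) /
                  (norm D * norm (Xk k ** transpose Y + Y ** transpose (Xk k))) | Y::real^'r^'n.
                  Xk k ** transpose Y + Y ** transpose (Xk k) \<noteq> 0})"
  assumes twice: "twice_differentiable \<phi>"
    and lip: "grad_lipschitz L \<phi>"
    and rsc: "restricted_strongly_convex \<mu> (2 * r) \<phi>"
    and argmin: "\<forall>M. \<phi> Mstar \<le> \<phi> M"
    and Mstar_psd: "psd Mstar"
    and Mstar_rank: "rank Mstar \<le> r"
    and neq: "X ** transpose X \<noteq> Mstar"
    and svd: "X = (\<Sum>i=1..r. \<sigma> i *\<^sub>R outer (u i) (v i))"
    and u_orth: "\<forall>i\<in>{1..r}. \<forall>j\<in>{1..r}. u i \<bullet> u j = (if i = j then 1 else 0)"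
    and v_orth: "\<forall>i\<in>{1..r}. \<forall>j\<in>{1..r}. v i \<bullet> v j = (if i = j then 1 else 0)"
    and \<sigma>_nonneg: "\<forall>i\<in>{1..r}. \<sigma> i \<ge> 0"
    and \<sigma>_dec: "\<forall>i\<in>{1..r}. \<forall>j\<in>{1..r}. i \<le> j \<longrightarrow> \<sigma> j \<le> \<sigma> i"
    and \<eta>_nonneg: "\<eta> \<ge> 0"
    and pd_shift: "pd (transpose X ** X + \<eta> *\<^sub>R mat 1)"
  shows "\<forall>k\<in>{1..r}. 0 < eigval k (X ** transpose X) \<longrightarrow>
           (\<mu> + L) / sqrt 2 * (cos\<theta> k - \<delta>) / sqrt (1 + \<eta> / eigval k (X ** transpose X))
             \<le> dual_local_norm (grad f X) X \<eta> / norm D"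
proof (intro ballI impI)
  interpret compact_svd X \<sigma> u v
    by unfold_locales (use svd u_orth v_orth \<sigma>_nonneg \<sigma>_dec in \<open>simp_all add: r_def orthonormal_on_def\<close>)
  fix k assume k: "k \<in> {1..r}" and pos: "0 < eigval k (X ** transpose X)"
  have eig: "eigval k (X ** transpose X) = (\<sigma> k)\<^sup>2" using k eigval_gram by (simp add: r_def)
  then have \<sigma>k: "0 < \<sigma> k" using pos \<sigma>_nonneg k by (simp add: r_def less_le)
  have D: "transpose D = D" "D \<noteq> 0"
    using Mstar_psd neq by (simp_all add: D_def psd_def transpose_diff matrix_transpose_mul)
  obtain V where V: "subspace V" "dim V \<le> 2 * r" "\<And>i. i \<in> {1..r} \<Longrightarrow> u i \<in> V"
    "maps_into Mstar V" "maps_into D V"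
    using residual_subspace[OF Mstar_rank[unfolded r_def]] unfolding r_def D_def by blast
  obtain Y Z where XY: "sym_prod X Y = Z"
    and tangent: "\<And>Y'. D \<bullet> sym_prod (truncation k) Y' = Z \<bullet> sym_prod (truncation k) Y'"
    and DZ: "D \<bullet> Z = (norm Z)\<^sup>2"
    and YT: "norm (Y ** sqrt_shifted_gram \<eta>) * sqrt 2 \<le> sqrt (1 + \<eta> / (\<sigma> k)\<^sup>2) * norm Z"
    and ZV: "maps_into Z V"
    using descent_direction[OF k[unfolded r_def] \<sigma>k D(1) \<eta>_nonneg, of thesis] V(1,3,5)
    unfolding r_def by blast
  have T0: "sym_prod (truncation k) (truncation k) \<noteq> 0"
    using k \<sigma>k truncation_gram_nonzero by (simp add: r_def)
  have "cos\<theta> k = Sup {D \<bullet> sym_prod (truncation k) Y / (norm D * norm (sym_prod (truncation k) Y)) |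
      Y. sym_prod (truncation k) Y \<noteq> 0}"
    by (simp add: cos\<theta>_def Xk_def truncation_def sym_prod_def)
  then have "-1 \<le> cos\<theta> k" "cos\<theta> k \<le> norm Z / norm D"
    by (simp_all add: Sup_cosine_ge[of "sym_prod (truncation k)", OF T0]
        Sup_cosine_le[of "sym_prod (truncation k)", OF T0 D(2) tangent])
  moreover have "Mstar + D = X ** transpose X" by (simp add: D_def)
  then have "(\<mu> + L) * (norm Z)\<^sup>2 - (L - \<mu>) * (norm D * norm Z) \<le> 2 * (grad \<phi> (X ** transpose X) \<bullet> Z)"
    using grad_inner_lower_bound[OF twice lip rsc V(1,2,4)
        grad_eq_0_at_minimum[OF grad_has_derivative[OF twice] argmin] V(5) ZV]
    unfolding DZ by simp
  moreover have "grad f X \<bullet> Y = grad \<phi> (X ** transpose X) \<bullet> Z"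
    unfolding f_def XY[symmetric] by (rule inner_grad_gram_comp[OF grad_has_derivative[OF twice]])
  moreover have "grad f X \<bullet> Y \<le> dual_local_norm (grad f X) X \<eta> * norm (Y ** sqrt_shifted_gram \<eta>)"
    by (rule inner_le_dual_local_norm[OF pd_shift])
  moreover have "0 \<le> L" "\<mu> \<le> L"
    using grad_lipschitz_nonneg[OF lip] restricted_convexity_le_lipschitz[OF twice lip rsc]
    by (simp_all add: r_def)
  ultimately show "(\<mu> + L) / sqrt 2 * (cos\<theta> k - \<delta>) / sqrt (1 + \<eta> / eigval k (X ** transpose X))
      \<le> dual_local_norm (grad f X) X \<eta> / norm D"
    unfolding eig \<delta>_def using D(2) YT \<eta>_nonneg \<sigma>k
    by (intro angle_bound_arith[where g = "grad f X \<bullet> Y" and y = "norm (Y ** sqrt_shifted_gram \<eta>)"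
          and z = "norm Z"]) (auto simp: dual_local_norm_def add_pos_nonneg)
qed

end
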